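(* Let $\mathcal{M}$ be a causal MDP as described in the context, with finite state set $\mathcal{S}$ ($|\mathcal{S}|=S$), finite intervention (action) set $\mathcal{A}$, finite parent-value set $\mathcal{Z}$ ($|\mathcal{Z}|=Z$), horizon $H$, and $K$ episodes, $T=KH$. Let $\delta>0$ and run the algorithm C-UCBVI described in the context with confidence parameter $\delta$. Then with probability at least $1-\delta$, the regret satisfies $$R_K=\sum_{k=1}^K\big(V_1^*(s_{k,1})-V_1^{\pi_k}(s_{k,1})\big)=\tilde O\big(HS\sqrt{ZT}\big),$$ where $\tilde O$ hides logarithmic factors and lower-order terms that do not depend on $T$.
   Context: Causal MDP: finite state set $\mathcal{S}$, action set $\mathcal{A}$ (interventions), and a finite set $\mathcal{Z}$ of possible values of the parent variables $\mathbf{Z}$ of the reward and state variables. There are unknown transition probabilities $\mathbb{P}(s'\mid s,\mathbf{z})$ for $s,s'\in\mathcal{S},\mathbf{z}\in\mathcal{Z}$, known conditional distributions $P(\mathbf{z}\mid s,a)$ on $\mathcal{Z}$ for each $(s,a)\in\mathcal{S}\times\mathcal{A}$, and known rewards $R(s,\mathbf{z})\in[0,1]$. Thus $\mathbb{P}(s'\mid s,a)=\sum_{\mathbf{z}}\mathbb{P}(s'\mid s,\mathbf{z})P(\mathbf{z}\mid s,a)$ and $R(s,a)=\sum_{\mathbf{z}}R(s,\mathbf{z})P(\mathbf{z}\mid s,a)$. Interaction is episodic: in episode $k=1,\dots,K$ an initial state $s_{k,1}$ is chosen arbitrarily (possibly adversarially); at each step $h=1,\dots,H$ the agent observes $s_{k,h}$,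 picks $a_{k,h}$, receives reward $R(s_{k,h},a_{k,h})$, observes $\mathbf{z}_{k,h}\sim P(\cdot\mid s_{k,h},a_{k,h})$, and the next state is $s_{k,h+1}\sim\mathbb{P}(\cdot\mid s_{k,h},\mathbf{z}_{k,h})$. A (deterministic) policy is $\pi:\mathcal{S}\times[H]\to\mathcal{A}$; $V_h^\pi(s)=\mathbb{E}[\sum_{h'=h}^H R(s_{h'},\pi(s_{h'},h'))\mid s_h=s]$, $V_h^*(s)=\sup_\pi V_h^\pi(s)$; $\pi_k$ is the policy used in episode $k$. Algorithm C-UCBVI (parameter $\delta$): before episode $k$, using all tuples $(s_{j,h},a_{j,h},\mathbf{z}_{j,h},s_{j,h+1})$ from earlier episodes, let $N_k(s,\mathbf{z},y)$ be the number of tuples with state $s$, parent value $\mathbf{z}$, next state $y$, $N_k(s,\mathbf{z})=\sum_y N_k(s,\mathbf{z},y)$, and $\hat{\mathbb{P}}_k(y\mid s,\mathbf{z})=N_k(s,\mathbf{z},y)/N_k(s,\mathbf{z})$ when $N_k(s,\mathbf{z})>0$. Let $L=\log(5SHKZT/\delta)$ and $b_{k,h}(s,\mathbf{z})=7HL\sqrt{S/N_k(s,\mathbf{z})}$. Set $V_{k,H+1}\equiv0$ and for $h=H,\dots,1$: $q_{k,h}(s,\mathbf{z})=\min\{H,\,R(s,\mathbf{z})+\sum_y\hat{\mathbb{P}}_k(y\mid s,\mathbf{z})V_{k,h+1}(y)+b_{k,h}(s,\mathbf{z})\}$ if $N_k(s,\mathbf{z})>0$ and $q_{k,h}(s,\mathbf{z})=H$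 otherwise; $Q_{k,h}(s,a)=\sum_{\mathbf{z}}P(\mathbf{z}\mid s,a)q_{k,h}(s,\mathbf{z})$; $V_{k,h}(s)=\max_a Q_{k,h}(s,a)$. (In the first episode $Q_{1,h}\equiv H$.) In episode $k$ the agent plays $a_{k,h}=\arg\max_{a\in\mathcal{A}}Q_{k,h}(s_{k,h},a)$. *)

theory Defs
  imports "HOL-Probability.Probability"
begin

text \<open>States are the naturals below S, interventions (actions) the naturals
below nA, parent values the naturals below Z.  An observed tuple is
(s, a, z, s') = (state, action, parent value, next state).\<close>

type_synonym tup = "nat \<times> nat \<times> nat \<times> nat"

definition R_sa :: "nat \<Rightarrow> (nat \<Rightarrow> nat \<Rightarrow> nat pmf) \<Rightarrow> (nat \<Rightarrow> nat \<Rightarrow> real) \<Rightarrow> nat \<Rightarrow> nat \<Rightarrow> real" where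
  "R_sa Z Pz R s a = (\<Sum>z<Z. pmf (Pz s a) z * R s z)"

definition P_sa :: "nat \<Rightarrow> (nat \<Rightarrow> nat \<Rightarrow> nat pmf) \<Rightarrow> (nat \<Rightarrow> nat \<Rightarrow> nat pmf) \<Rightarrow> nat \<Rightarrow> nat \<Rightarrow> nat \<Rightarrow> real" where
  "P_sa Z P Pz s a y = (\<Sum>z<Z. pmf (P s z) y * pmf (Pz s a) z)"

text \<open>Value of a deterministic policy pol (state, step) with j steps remaining,
i.e. V_rem j = V_{H+1-j}^pol.\<close>
primrec V_rem :: "nat \<Rightarrow> nat \<Rightarrow> (nat \<Rightarrow> nat \<Rightarrow> nat pmf) \<Rightarrow> (nat \<Rightarrow> nat \<Rightarrow> nat pmf) \<Rightarrow>
    (nat \<Rightarrow> nat \<Rightarrow> real) \<Rightarrow> nat \<Rightarrow> (nat \<Rightarrow> nat \<Rightarrow> nat) \<Rightarrow> nat \<Rightarrow> nat \<Rightarrow> real" where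
  "V_rem S Z P Pz R H pol 0 = (\<lambda>s. 0)"
| "V_rem S Z P Pz R H pol (Suc j) = (\<lambda>s.
     R_sa Z Pz R s (pol s (H - j)) +
     (\<Sum>y<S. P_sa Z P Pz s (pol s (H - j)) y * V_rem S Z P Pz R H pol j y))"

definition V_pi :: "nat \<Rightarrow> nat \<Rightarrow> (nat \<Rightarrow> nat \<Rightarrow> nat pmf) \<Rightarrow> (nat \<Rightarrow> nat \<Rightarrow> nat pmf) \<Rightarrow>
    (nat \<Rightarrow> nat \<Rightarrow> real) \<Rightarrow> nat \<Rightarrow> (nat \<Rightarrow> nat \<Rightarrow> nat) \<Rightarrow> nat \<Rightarrow> nat \<Rightarrow> real" where
  "V_pi S Z P Pz R H pol h s = V_rem S Z P Pz R H pol (H + 1 - h) s"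

definition policies :: "nat \<Rightarrow> (nat \<Rightarrow> nat \<Rightarrow> nat) set" where
  "policies nA = {pol. \<forall>s h. pol s h < nA}"

definition V_star :: "nat \<Rightarrow> nat \<Rightarrow> nat \<Rightarrow> (nat \<Rightarrow> nat \<Rightarrow> nat pmf) \<Rightarrow> (nat \<Rightarrow> nat \<Rightarrow> nat pmf) \<Rightarrow>
    (nat \<Rightarrow> nat \<Rightarrow> real) \<Rightarrow> nat \<Rightarrow> nat \<Rightarrow> nat \<Rightarrow> real" where
  "V_star S nA Z P Pz R H h s = (SUP pol\<in>policies nA. V_pi S Z P Pz R H pol h s)"

definition cnt_sz :: "tup list \<Rightarrow> nat \<Rightarrow> nat \<Rightarrow> nat" where
  "cnt_sz D s z = length (filter (\<lambda>(s', a', z', y'). s' = s \<and> z' = z) D)"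

definition cnt_szy :: "tup list \<Rightarrow> nat \<Rightarrow> nat \<Rightarrow> nat \<Rightarrow> nat" where
  "cnt_szy D s z y = length (filter (\<lambda>(s', a', z', y'). s' = s \<and> z' = z \<and> y' = y) D)"

definition phat :: "tup list \<Rightarrow> nat \<Rightarrow> nat \<Rightarrow> nat \<Rightarrow> real" where
  "phat D s z y = real (cnt_szy D s z y) / real (cnt_sz D s z)"

definition conf_L :: "nat \<Rightarrow> nat \<Rightarrow> nat \<Rightarrow> nat \<Rightarrow> real \<Rightarrow> real" where
  "conf_L S Z H K \<delta> = ln (5 * real S * real H * real K * real Z * (real K * real H) / \<delta>)"

definition ucb_q :: "nat \<Rightarrow> nat \<Rightarrow> real \<Rightarrow> (nat \<Rightarrow> nat \<Rightarrow> real) \<Rightarrow> tup list \<Rightarrow> (nat \<Rightarrow> real) \<Rightarrow> nat \<Rightarrow> nat \<Rightarrow> real" where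
  "ucb_q S H L R D W s z =
     (if cnt_sz D s z = 0 then real H
      else min (real H) (R s z + (\<Sum>y<S. phat D s z y * W y)
                         + 7 * real H * L * sqrt (real S / real (cnt_sz D s z))))"

text \<open>Optimistic values with j steps remaining: ucb_V j = V_{k,H+1-j}.\<close>
primrec ucb_V :: "nat \<Rightarrow> nat \<Rightarrow> nat \<Rightarrow> (nat \<Rightarrow> nat \<Rightarrow> nat pmf) \<Rightarrow> (nat \<Rightarrow> nat \<Rightarrow> real) \<Rightarrow> nat \<Rightarrow> real \<Rightarrow>
    tup list \<Rightarrow> nat \<Rightarrow> nat \<Rightarrow> real" where
  "ucb_V S nA Z Pz R H L D 0 = (\<lambda>s. 0)"
| "ucb_V S nA Z Pz R H L D (Suc j) = (\<lambda>s.
     Max ((\<lambda>a. \<Sum>z<Z. pmf (Pz s a) z * ucb_q S H L R D (ucb_V S nA Z Pz R H L D j) s z) ` {..<nA}))"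

definition ucb_Q :: "nat \<Rightarrow> nat \<Rightarrow> nat \<Rightarrow> (nat \<Rightarrow> nat \<Rightarrow> nat pmf) \<Rightarrow> (nat \<Rightarrow> nat \<Rightarrow> real) \<Rightarrow> nat \<Rightarrow> real \<Rightarrow>
    tup list \<Rightarrow> nat \<Rightarrow> nat \<Rightarrow> nat \<Rightarrow> real" where
  "ucb_Q S nA Z Pz R H L D h s a =
     (\<Sum>z<Z. pmf (Pz s a) z * ucb_q S H L R D (ucb_V S nA Z Pz R H L D (H - h)) s z)"

text \<open>The greedy policy pi_k; sel is an (arbitrary) argmax selector over actions.\<close>
definition ucb_policy :: "((nat \<Rightarrow> real) \<Rightarrow> nat) \<Rightarrow> nat \<Rightarrow> nat \<Rightarrow> nat \<Rightarrow> (nat \<Rightarrow> nat \<Rightarrow> nat pmf) \<Rightarrow>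
    (nat \<Rightarrow> nat \<Rightarrow> real) \<Rightarrow> nat \<Rightarrow> real \<Rightarrow> tup list \<Rightarrow> nat \<Rightarrow> nat \<Rightarrow> nat" where
  "ucb_policy sel S nA Z Pz R H L D = (\<lambda>s h. sel (\<lambda>a. ucb_Q S nA Z Pz R H L D h s a))"

primrec ep_steps :: "(nat \<Rightarrow> nat \<Rightarrow> nat pmf) \<Rightarrow> (nat \<Rightarrow> nat \<Rightarrow> nat pmf) \<Rightarrow> (nat \<Rightarrow> nat \<Rightarrow> nat) \<Rightarrow>
    nat \<Rightarrow> nat \<Rightarrow> nat \<Rightarrow> tup list pmf" where
  "ep_steps P Pz pol 0 h s = return_pmf []"
| "ep_steps P Pz pol (Suc n) h s =
     bind_pmf (Pz s (pol s h)) (\<lambda>z. bind_pmf (P s z) (\<lambda>y.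
       map_pmf (\<lambda>rest. (s, pol s h, z, y) # rest) (ep_steps P Pz pol n (Suc h) y)))"

text \<open>Distribution of the full data after k episodes of C-UCBVI; the initial state of each
episode is chosen by an (adaptive, adversarial) function init of all past data.\<close>
primrec cucbvi_run :: "nat \<Rightarrow> nat \<Rightarrow> nat \<Rightarrow> (nat \<Rightarrow> nat \<Rightarrow> nat pmf) \<Rightarrow> (nat \<Rightarrow> nat \<Rightarrow> nat pmf) \<Rightarrow>
    (nat \<Rightarrow> nat \<Rightarrow> real) \<Rightarrow> nat \<Rightarrow> real \<Rightarrow> (tup list \<Rightarrow> nat) \<Rightarrow> ((nat \<Rightarrow> real) \<Rightarrow> nat) \<Rightarrow>
    nat \<Rightarrow> tup list pmf" where
  "cucbvi_run S nA Z P Pz R H L init sel 0 = return_pmf []"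
| "cucbvi_run S nA Z P Pz R H L init sel (Suc k) =
     bind_pmf (cucbvi_run S nA Z P Pz R H L init sel k) (\<lambda>D.
       map_pmf (\<lambda>E. D @ E) (ep_steps P Pz (ucb_policy sel S nA Z Pz R H L D) H 1 (init D)))"

text \<open>Regret R_K = sum_k (V_1^*(s_{k,1}) - V_1^{pi_k}(s_{k,1})) computed from the full data D
(episode k+1, k < K, is preceded by the prefix take (k*H) D).\<close>
definition regret :: "nat \<Rightarrow> nat \<Rightarrow> nat \<Rightarrow> (nat \<Rightarrow> nat \<Rightarrow> nat pmf) \<Rightarrow> (nat \<Rightarrow> nat \<Rightarrow> nat pmf) \<Rightarrow>
    (nat \<Rightarrow> nat \<Rightarrow> real) \<Rightarrow> nat \<Rightarrow> nat \<Rightarrow> real \<Rightarrow> (tup list \<Rightarrow> nat) \<Rightarrow> ((nat \<Rightarrow> real) \<Rightarrow> nat) \<Rightarrow>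
    tup list \<Rightarrow> real" where
  "regret S nA Z P Pz R H K L init sel D =
     (\<Sum>k<K. V_star S nA Z P Pz R H 1 (init (take (k * H) D))
            - V_pi S Z P Pz R H (ucb_policy sel S nA Z Pz R H L (take (k * H) D)) 1
                  (init (take (k * H) D)))"

end

theory Submission
  imports Defs
begin

(*
  Call the data confident if, for every pair (s, z) visited N > 0 times and every set B of next
  states, the number of transitions from (s, z) into B deviates from N P(B | s, z) by at most
  N * 7 L sqrt (S / N).  Testing against all sets B makes the bonus b = H * 7 L sqrt (S / N) a
  valid confidence width for every value function with range [0, H].  Hence the optimistic values
  dominate the values of every policy, and V*_1 - V^{pi_k}_1 is at most the expected sum, along
  episode k, of the clipped bonuses min (H, 2 b).

  Confidence fails with probability at most delta / 2: the deviation after exactly n visits is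
  controlled by a Hoeffding supermartingale, and a union bound runs over s, z, B, n and the sign,
  which costs the factor 2 ^ S that the sqrt S in the bonus pays for.  A multiplicative Chernoff
  bound, through a second supermartingale, trades the expected bonus sums for the bonuses actually
  collected, at the price of the factor 1 - 1/e and an additive H^2 L, again with probability
  1 - delta / 2.  Finally, the bonuses collected at a pair (s, z) sum like sum_n 1 / sqrt n, and
  Cauchy-Schwarz over the S Z pairs gives O(H^2 S Z + H L S sqrt (Z T)).
*)

section \<open>Elementary inequalities\<close>

lemma sum_pmf_mult_le:
  assumes "finite A" "\<And>y. y \<in> A \<Longrightarrow> f y \<le> c" "0 \<le> c"
  shows "(\<Sum>y\<in>A. pmf p y * f y) \<le> c"
proof -
  have "(\<Sum>y\<in>A. pmf p y * f y) \<le> (\<Sum>y\<in>A. pmf p y) * c"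
    using assms(2) by (simp add: sum_distrib_right sum_mono mult_left_mono)
  also have "\<dots> \<le> c"
    using assms(1,3) by (simp add: measure_measure_pmf_finite[symmetric] mult_left_le_one_le)
  finally show ?thesis .
qed

lemma sum_mult_le_of_subset_sums:
  fixes d W :: "'a \<Rightarrow> real"
  assumes "finite A" "0 \<le> h" "\<And>y. y \<in> A \<Longrightarrow> 0 \<le> W y \<and> W y \<le> h"
    and subset_sums: "\<And>B. B \<subseteq> A \<Longrightarrow> (\<Sum>y\<in>B. d y) \<le> e"
  shows "(\<Sum>y\<in>A. d y * W y) \<le> h * e"
proof -
  have "(\<Sum>y\<in>A. d y * W y) \<le> (\<Sum>y\<in>A. h * (if 0 < d y then d y else 0))"
    using assms(3) by (intro sum_mono) (auto simp: mult.commute mult_left_mono mult_nonneg_nonpos)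
  also have "\<dots> = h * (\<Sum>y\<in>{y\<in>A. 0 < d y}. d y)"
    using assms(1) by (simp add: sum.inter_filter sum_distrib_left)
  also have "\<dots> \<le> h * e"
    using subset_sums assms(2) by (intro mult_left_mono) auto
  finally show ?thesis .
qed

lemma abs_sum_mult_le_of_subset_sums:
  fixes d W :: "'a \<Rightarrow> real"
  assumes "finite A" "0 \<le> h" "\<And>y. y \<in> A \<Longrightarrow> 0 \<le> W y \<and> W y \<le> h"
    and "\<And>B. B \<subseteq> A \<Longrightarrow> \<bar>\<Sum>y\<in>B. d y\<bar> \<le> e"
  shows "\<bar>\<Sum>y\<in>A. d y * W y\<bar> \<le> h * e"
proof -
  have "(\<Sum>y\<in>A. d y * W y) \<le> h * e"
    using assms by (intro sum_mult_le_of_subset_sums) (auto dest: abs_le_D1)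
  moreover have "(\<Sum>y\<in>A. - d y * W y) \<le> h * e"
    using assms by (intro sum_mult_le_of_subset_sums) (auto simp: sum_negf dest: abs_le_D2)
  ultimately show ?thesis
    by (simp add: sum_negf abs_le_iff)
qed

lemma sum_sqrt_le_sqrt_card_mult:
  fixes x :: "'a \<Rightarrow> real"
  assumes "\<And>i. i \<in> I \<Longrightarrow> 0 \<le> x i" "(\<Sum>i\<in>I. x i) \<le> T"
  shows "(\<Sum>i\<in>I. sqrt (x i)) \<le> sqrt (real (card I) * T)"
proof (rule real_le_rsqrt)
  have "(\<Sum>i\<in>I. sqrt (x i) * 1)\<^sup>2 \<le> (\<Sum>i\<in>I. (sqrt (x i))\<^sup>2) * (\<Sum>i\<in>I. 1\<^sup>2)"
    by (rule Cauchy_Schwarz_ineq_sum)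
  also have "\<dots> = (\<Sum>i\<in>I. x i) * real (card I)"
    using assms(1) by simp
  also have "\<dots> \<le> T * real (card I)"
    using assms(2) by (intro mult_right_mono) auto
  finally show "(\<Sum>i\<in>I. sqrt (x i))\<^sup>2 \<le> real (card I) * T"
    by (simp add: mult.commute)
qed

lemma sqrt_increment_le:
  assumes "0 < N" "m \<le> N"
  shows "real m / sqrt (real N) \<le> 3 * (sqrt (real N + real m) - sqrt (real N))"
proof -
  define a b where "a = sqrt (real N)" and "b = sqrt (real N + real m)"
  have "0 < a" "a \<le> b" using assms(1) by (simp_all add: a_def b_def)
  have "b \<le> sqrt (4 * real N)"
    using assms(2) by (simp add: b_def)
  then have "b \<le> 2 * a" by (simp add: a_def real_sqrt_mult)
  have "real m = (b - a) * (b + a)"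
    by (simp add: a_def b_def algebra_simps)
  also have "\<dots> \<le> (b - a) * (3 * a)"
    using \<open>a \<le> b\<close> \<open>b \<le> 2 * a\<close> by (intro mult_left_mono) auto
  finally show ?thesis
    using \<open>0 < a\<close> by (simp add: divide_le_eq a_def [symmetric] b_def [symmetric] mult_ac)
qed

lemma exp_neg_le_chord:
  fixes x :: real
  assumes "0 \<le> x" "x \<le> 1"
  shows "exp (- x) \<le> 1 - (1 - exp (-1)) * x"
  using convex_onD [OF convex_on_exp [of 1], of x 0 "-1"] assms by (simp add: algebra_simps)

definition clipped_bonus :: "real \<Rightarrow> real \<Rightarrow> nat \<Rightarrow> real" where
  "clipped_bonus h c n = (if n = 0 then h else min h (c / sqrt (real n)))"

lemma clipped_bonus_le: "clipped_bonus h c n \<le> h"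
  by (simp add: clipped_bonus_def)

lemma clipped_bonus_nonneg: "0 \<le> h \<Longrightarrow> 0 \<le> c \<Longrightarrow> 0 \<le> clipped_bonus h c n"
  by (simp add: clipped_bonus_def)

text \<open>While fewer than \<open>h\<close> samples have been seen, each of the at most \<open>h\<close> new samples
  costs at most \<open>h\<close>; afterwards \<open>m \<le> N\<close> and the cost telescopes against \<open>3 c sqrt N\<close>.\<close>

lemma clipped_bonus_increment_le:
  assumes "m \<le> h" "0 \<le> c"
  shows "real m * clipped_bonus (real h) c N
      + (real h * real (min N (2 * h)) + 3 * c * sqrt (real N))
    \<le> real h * real (min (N + m) (2 * h)) + 3 * c * sqrt (real (N + m))"
proof (cases "N < h \<or> N = 0")
  case True
  with assms(1) have "min (N + m) (2 * h) = N + m" "min N (2 * h) = N"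
    by auto
  moreover have "real m * clipped_bonus (real h) c N \<le> real m * real h"
    by (intro mult_left_mono clipped_bonus_le) auto
  moreover have "sqrt (real N) \<le> sqrt (real (N + m))"
    by simp
  ultimately show ?thesis
    using assms(2) mult_left_mono [of "sqrt (real N)" "sqrt (real (N + m))" "3 * c"]
    by (simp add: algebra_simps)
next
  case False
  with assms(1) have "0 < N" "m \<le> N"
    by auto
  have "clipped_bonus (real h) c N \<le> c / sqrt (real N)"
    using \<open>0 < N\<close> by (simp add: clipped_bonus_def)
  then have "real m * clipped_bonus (real h) c N \<le> c * (real m / sqrt (real N))"
    by (metis mult_left_mono of_nat_0_le_iff times_divide_eq_right mult.commute)
  also have "\<dots> \<le> c * (3 * (sqrt (real N + real m) - sqrt (real N)))"
    using sqrt_increment_le [OF \<open>0 < N\<close> \<open>m \<le> N\<close>] assms(2) by (intro mult_left_mono)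
  finally have "real m * clipped_bonus (real h) c N
      \<le> 3 * c * sqrt (real (N + m)) - 3 * c * sqrt (real N)"
    by (simp add: algebra_simps)
  moreover have "real h * real (min N (2 * h)) \<le> real h * real (min (N + m) (2 * h))"
    by (intro mult_left_mono) auto
  ultimately show ?thesis
    by linarith
qed

lemma sum_clipped_bonus_le:
  fixes n :: "nat \<Rightarrow> nat"
  assumes "\<And>k. n k \<le> h" "0 \<le> c"
  shows "(\<Sum>k<K. real (n k) * clipped_bonus (real h) c (\<Sum>i<k. n i))
    \<le> real h * real (min (\<Sum>i<K. n i) (2 * h)) + 3 * c * sqrt (real (\<Sum>i<K. n i))"
proof (induction K)
  case 0
  then show ?case by simp
next
  case (Suc K)
  then show ?case
    using clipped_bonus_increment_le [OF assms(1) assms(2), of K "\<Sum>i<K. n i"]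
    by (simp add: add.commute)
qed

lemma nn_integral_pmf_eq_sum:
  assumes "finite A" "set_pmf M \<subseteq> A" "\<And>x. x \<in> A \<Longrightarrow> 0 \<le> f x"
  shows "(\<integral>\<^sup>+x. ennreal (f x) \<partial>measure_pmf M) = ennreal (\<Sum>x\<in>A. pmf M x * f x)"
proof -
  have "(\<integral>\<^sup>+x. ennreal (f x) \<partial>measure_pmf M) = (\<Sum>x\<in>A. ennreal (f x) * pmf M x)"
    using assms by (intro nn_integral_measure_pmf_support) auto
  also have "\<dots> = ennreal (\<Sum>x\<in>A. pmf M x * f x)"
    using assms(3) by (simp add: sum_ennreal [symmetric] ennreal_mult mult.commute)
  finally show ?thesis .
qed

lemma pmf_prob_ge_le_inverse:
  assumes "(\<integral>\<^sup>+x. \<Phi> x \<partial>measure_pmf M) \<le> 1" "0 < c"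
  shows "measure_pmf.prob M {x. ennreal c \<le> \<Phi> x} \<le> 1 / c"
proof -
  have "ennreal c * emeasure (measure_pmf M) {x. ennreal c \<le> \<Phi> x}
      = (\<integral>\<^sup>+x. ennreal c * indicator {x. ennreal c \<le> \<Phi> x} x \<partial>measure_pmf M)"
    by (simp add: nn_integral_cmult_indicator)
  also have "\<dots> \<le> (\<integral>\<^sup>+x. \<Phi> x \<partial>measure_pmf M)"
    by (intro nn_integral_mono) (auto split: split_indicator)
  finally have "ennreal (c * measure_pmf.prob M {x. ennreal c \<le> \<Phi> x}) \<le> 1"
    using assms by (simp add: measure_pmf.emeasure_eq_measure ennreal_mult)
  then show ?thesis
    using assms(2) by (simp add: ennreal_le_1 field_simps mult.commute)
qed

lemma ennreal_le_one_minus: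
  "x + ennreal a \<le> 1 \<Longrightarrow> 0 \<le> a \<Longrightarrow> x \<le> ennreal (1 - a)"
  by (metis ennreal_1 ennreal_le_minus_iff ennreal_minus)

text \<open>A multiplicative Chernoff bound, from the chord of the convex function \<open>exp (- x)\<close>
  on \<open>[0, 1]\<close>.\<close>

lemma nn_integral_exp_neg_le:
  fixes G :: "'a \<Rightarrow> real"
  assumes "0 < m" and G: "\<And>E. E \<in> set_pmf Q \<Longrightarrow> 0 \<le> G E \<and> G E \<le> m"
    and mean: "(\<integral>\<^sup>+E. ennreal (G E) \<partial>measure_pmf Q) = ennreal \<mu>" and "0 \<le> \<mu>"
  shows "(\<integral>\<^sup>+E. ennreal (exp (- (G E / m))) \<partial>measure_pmf Q)
    \<le> ennreal (exp (- ((1 - exp (-1)) * \<mu> / m)))"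
proof -
  define c where "c = 1 - exp (-1::real)"
  have "0 \<le> c" by (simp add: c_def)
  have "ennreal (c / m * \<mu>) = ennreal (c / m) * ennreal \<mu>"
    using \<open>0 < m\<close> \<open>0 \<le> c\<close> \<open>0 \<le> \<mu>\<close> by (intro ennreal_mult) auto
  then have "(\<integral>\<^sup>+E. ennreal (exp (- (G E / m))) \<partial>measure_pmf Q) + ennreal (c / m * \<mu>)
      = (\<integral>\<^sup>+E. ennreal (exp (- (G E / m))) + ennreal (c / m) * ennreal (G E) \<partial>measure_pmf Q)"
    by (simp add: nn_integral_add nn_integral_cmult mean)
  also have "\<dots> \<le> (\<integral>\<^sup>+E. 1 \<partial>measure_pmf Q)"
  proof (intro nn_integral_mono_AE, unfold AE_measure_pmf_iff, intro ballI)
    fix E assume "E \<in> set_pmf Q"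
    with G \<open>0 < m\<close> have "0 \<le> G E / m" "G E / m \<le> 1" by auto
    then have "exp (- (G E / m)) + c / m * G E \<le> 1"
      using exp_neg_le_chord [of "G E / m"] by (simp add: c_def)
    then show "ennreal (exp (- (G E / m))) + ennreal (c / m) * ennreal (G E) \<le> 1"
      using G [OF \<open>E \<in> set_pmf Q\<close>] \<open>0 < m\<close> \<open>0 \<le> c\<close>
      by (simp add: ennreal_mult [symmetric] ennreal_plus [symmetric] del: ennreal_plus)
  qed
  finally have "(\<integral>\<^sup>+E. ennreal (exp (- (G E / m))) \<partial>measure_pmf Q) \<le> ennreal (1 - c / m * \<mu>)"
    using \<open>0 < m\<close> \<open>0 \<le> c\<close> \<open>0 \<le> \<mu>\<close>
    by (intro ennreal_le_one_minus) (simp_all add: measure_pmf.emeasure_space_1)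
  also have "\<dots> \<le> ennreal (exp (- (c * \<mu> / m)))"
    using exp_ge_add_one_self [of "- (c * \<mu> / m)"] by (intro ennreal_leI) simp
  finally show ?thesis
    by (simp add: c_def)
qed

text \<open>Hoeffding's lemma for \<open>\<sigma> 1\<^sub>B\<close>, a variable with range \<open>[-1, 1]\<close>: hence the \<open>l\<^sup>2 / 2\<close>.\<close>

lemma nn_integral_exp_indicator_le_1:
  assumes "finite B" "0 < l" "\<sigma> = 1 \<or> \<sigma> = -1"
  shows "(\<integral>\<^sup>+y. ennreal (exp (l * \<sigma> * (indicator B y - (\<Sum>y\<in>B. pmf M y)) - l\<^sup>2 / 2))
      \<partial>measure_pmf M) \<le> 1"
proof -
  define p where "p = (\<Sum>y\<in>B. pmf M y)"
  define f where "f = (\<lambda>y. \<sigma> * indicator B y :: real)"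
  interpret interval_bounded_random_variable "measure_pmf M" f "-1" 1
    using assms(3) by unfold_locales (auto simp: f_def indicator_def)
  have "measure_pmf.expectation M f = \<sigma> * p"
    using assms(1) by (simp add: f_def p_def measure_measure_pmf_finite)
  then have "(\<integral>\<^sup>+y. ennreal (exp (l * (f y - \<sigma> * p))) \<partial>measure_pmf M) \<le> ennreal (exp (l\<^sup>2 / 2))"
    using Hoeffdings_lemma_nn_integral [OF assms(2)] by (simp add: power2_eq_square)
  then have "(\<integral>\<^sup>+y. ennreal (exp (l * (f y - \<sigma> * p))) * ennreal (exp (- (l\<^sup>2 / 2))) \<partial>measure_pmf M)
      \<le> ennreal (exp (l\<^sup>2 / 2)) * ennreal (exp (- (l\<^sup>2 / 2)))"
    by (simp add: nn_integral_multc mult_right_mono)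
  moreover have "ennreal (exp (l * (f y - \<sigma> * p))) * ennreal (exp (- (l\<^sup>2 / 2)))
      = ennreal (exp (l * \<sigma> * (indicator B y - p) - l\<^sup>2 / 2))" for y
    by (simp add: f_def ennreal_mult [symmetric] mult_exp_exp algebra_simps)
  moreover have "ennreal (exp (l\<^sup>2 / 2)) * ennreal (exp (- (l\<^sup>2 / 2))) = 1"
    by (simp add: ennreal_mult [symmetric] exp_minus_inverse)
  ultimately show ?thesis
    by (simp add: p_def)
qed

definition cnt_sz_in :: "tup list \<Rightarrow> nat \<Rightarrow> nat \<Rightarrow> nat set \<Rightarrow> nat" where
  "cnt_sz_in D s z B = length (filter (\<lambda>(s', a', z', y'). s' = s \<and> z' = z \<and> y' \<in> B) D)"

definition path_cost :: "(nat \<Rightarrow> nat \<Rightarrow> real) \<Rightarrow> tup list \<Rightarrow> real" where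
  "path_cost g E = sum_list (map (\<lambda>(s, a, z, y). g s z) E)"

lemma path_cost_Nil [simp]: "path_cost g [] = 0"
  and path_cost_Cons [simp]: "path_cost g ((s, a, z, y) # E) = g s z + path_cost g E"
  by (simp_all add: path_cost_def)

lemma path_cost_nonneg: "(\<And>s z. 0 \<le> g s z) \<Longrightarrow> 0 \<le> path_cost g E"
  by (induction E) (auto intro: add_nonneg_nonneg)

lemma path_cost_le:
  assumes "\<And>s z. g s z \<le> c"
  shows "path_cost g E \<le> c * real (length E)"
proof (induction E)
  case (Cons t E)
  then show ?case
    using assms [of "fst t" "fst (snd (snd t))"] by (cases t) (simp add: algebra_simps)
qed simp

lemma cnt_sz_append [simp]: "cnt_sz (D @ E) s z = cnt_sz D s z + cnt_sz E s z"
  by (simp add: cnt_sz_def)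

lemma cnt_sz_le_length: "cnt_sz D s z \<le> length D"
  by (simp add: cnt_sz_def)

lemma cnt_sz_take_mult:
  "cnt_sz (take (k * H) D) s z = (\<Sum>i<k. cnt_sz (take H (drop (i * H) D)) s z)"
proof (induction k)
  case 0
  then show ?case by (simp add: cnt_sz_def)
next
  case (Suc k)
  have "Suc k * H = k * H + H"
    by simp
  then have "take (Suc k * H) D = take (k * H) D @ take H (drop (k * H) D)"
    by (simp only: take_add)
  then show ?case
    using Suc by simp
qed

lemma cnt_sz_in_insert:
  "y \<notin> B \<Longrightarrow> cnt_sz_in D s z (insert y B) = cnt_szy D s z y + cnt_sz_in D s z B"
  by (induction D) (auto simp: cnt_szy_def cnt_sz_in_def)

lemma sum_cnt_szy: "finite B \<Longrightarrow> (\<Sum>y\<in>B. real (cnt_szy D s z y)) = real (cnt_sz_in D s z B)"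
  by (induction B rule: finite_induct) (simp_all add: cnt_sz_in_insert, simp add: cnt_sz_in_def)

lemma sum_cnt_sz_singleton:
  assumes "\<And>s z. \<not> (s < S \<and> z < Z) \<Longrightarrow> g s z = 0"
  shows "(\<Sum>s<S. \<Sum>z<Z. real (cnt_sz [(s', a', z', y')] s z) * g s z) = g s' z'"
proof -
  have single: "real (cnt_sz [(s', a', z', y')] s z) * g s z
      = (if s = s' \<and> z = z' then g s z else 0)"
    for s z by (auto simp: cnt_sz_def)
  have "(\<Sum>s<S. \<Sum>z<Z. real (cnt_sz [(s', a', z', y')] s z) * g s z)
      = (\<Sum>s<S. if s = s' then (if z' < Z then g s' z' else 0) else 0)"
    by (intro sum.cong refl) (auto simp: single)
  also have "\<dots> = g s' z'"
    using assms by auto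
  finally show ?thesis .
qed

lemma path_cost_eq_sum_cnt_sz:
  assumes "\<And>s z. \<not> (s < S \<and> z < Z) \<Longrightarrow> g s z = 0"
  shows "path_cost g E = (\<Sum>s<S. \<Sum>z<Z. real (cnt_sz E s z) * g s z)"
proof (induction E)
  case Nil
  then show ?case by (simp add: path_cost_def cnt_sz_def)
next
  case (Cons t E)
  obtain s' a' z' y' where t: "t = (s', a', z', y')"
    by (cases t) auto
  have "cnt_sz (t # E) s z = cnt_sz [t] s z + cnt_sz E s z" for s z
    using cnt_sz_append [of "[t]" E] by simp
  then show ?case
    using Cons sum_cnt_sz_singleton [OF assms]
    by (simp add: path_cost_def t algebra_simps sum.distrib)
qed

lemma sum_cnt_sz_le_length: "(\<Sum>s<S. \<Sum>z<Z. cnt_sz E s z) \<le> length E"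
proof -
  have "real (\<Sum>s<S. \<Sum>z<Z. cnt_sz E s z) = path_cost (\<lambda>s z. if s < S \<and> z < Z then 1 else 0) E"
    by (subst path_cost_eq_sum_cnt_sz [of S Z]) auto
  also have "\<dots> \<le> real (length E)"
    by (induction E) (auto simp: path_cost_def)
  finally show ?thesis
    by linarith
qed

lemma sum_sqrt_cnt_sz_le:
  assumes "real (length E) \<le> T"
  shows "(\<Sum>s<S. \<Sum>z<Z. sqrt (real (cnt_sz E s z))) \<le> sqrt (real S * real Z * T)"
proof -
  define x where "x p = real (cnt_sz E (fst p) (snd p))" for p
  have "(\<Sum>p\<in>{..<S} \<times> {..<Z}. x p) = real (\<Sum>s<S. \<Sum>z<Z. cnt_sz E s z)"
    by (simp add: x_def sum.cartesian_product case_prod_beta)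
  also have "\<dots> \<le> T"
    using sum_cnt_sz_le_length [where S = S and Z = Z and E = E] assms by linarith
  finally have "(\<Sum>p\<in>{..<S} \<times> {..<Z}. sqrt (x p)) \<le> sqrt (real (card ({..<S} \<times> {..<Z})) * T)"
    by (intro sum_sqrt_le_sqrt_card_mult) (auto simp: x_def)
  then show ?thesis
    by (simp add: x_def sum.cartesian_product case_prod_beta card_cartesian_product)
qed

lemma sum_cnt_sz_clipped_bonus_le:
  assumes "0 \<le> c"
  shows "(\<Sum>k<K. real (cnt_sz (take H (drop (k * H) D)) s z)
      * clipped_bonus (real H) c (\<Sum>i<k. cnt_sz (take H (drop (i * H) D)) s z))
    \<le> 2 * (real H)\<^sup>2 + 3 * c * sqrt (real (cnt_sz (take (K * H) D) s z))"
proof -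
  define n where "n i = cnt_sz (take H (drop (i * H) D)) s z" for i
  have "n k \<le> H" for k
    using cnt_sz_le_length [of "take H (drop (k * H) D)" s z] by (simp add: n_def)
  then have "(\<Sum>k<K. real (n k) * clipped_bonus (real H) c (\<Sum>i<k. n i))
      \<le> real H * real (min (\<Sum>i<K. n i) (2 * H)) + 3 * c * sqrt (real (\<Sum>i<K. n i))"
    using assms by (rule sum_clipped_bonus_le)
  also have "real H * real (min (\<Sum>i<K. n i) (2 * H)) \<le> real H * (2 * real H)"
    by (intro mult_left_mono) auto
  finally show ?thesis
    by (simp add: n_def cnt_sz_take_mult power2_eq_square)
qed

lemma length_ep_steps: "E \<in> set_pmf (ep_steps P Pz pol n h s) \<Longrightarrow> length E = n"
  by (induction n arbitrary: h s E) (auto simp: set_bind_pmf)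

lemma length_cucbvi_run:
  "D \<in> set_pmf (cucbvi_run S nA Z P Pz R H L init sel k) \<Longrightarrow> length D = k * H"
  by (induction k arbitrary: D) (auto simp: set_bind_pmf dest: length_ep_steps)

lemma nn_integral_ep_steps_le:
  assumes "\<And>D s a. (\<integral>\<^sup>+z. \<integral>\<^sup>+y. \<Phi> (D @ [(s, a, z, y)]) \<partial>measure_pmf (P s z)
    \<partial>measure_pmf (Pz s a)) \<le> \<Phi> D"
  shows "(\<integral>\<^sup>+E. \<Phi> (D @ E) \<partial>measure_pmf (ep_steps P Pz pol n h s)) \<le> \<Phi> D"
proof (induction n arbitrary: D h s)
  case 0
  then show ?case by simp
next
  case (Suc n)
  have "(\<integral>\<^sup>+E. \<Phi> (D @ E) \<partial>measure_pmf (ep_steps P Pz pol (Suc n) h s))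
      = (\<integral>\<^sup>+z. \<integral>\<^sup>+y. \<integral>\<^sup>+E. \<Phi> ((D @ [(s, pol s h, z, y)]) @ E)
          \<partial>measure_pmf (ep_steps P Pz pol n (Suc h) y)
          \<partial>measure_pmf (P s z) \<partial>measure_pmf (Pz s (pol s h)))"
    by simp
  also have "\<dots> \<le> (\<integral>\<^sup>+z. \<integral>\<^sup>+y. \<Phi> (D @ [(s, pol s h, z, y)])
      \<partial>measure_pmf (P s z) \<partial>measure_pmf (Pz s (pol s h)))"
    by (intro nn_integral_mono Suc.IH)
  also have "\<dots> \<le> \<Phi> D"
    by (rule assms)
  finally show ?case .
qed

lemma nn_integral_cucbvi_run_le:
  assumes "\<And>k D. length D = k * H \<Longrightarrow>
    (\<integral>\<^sup>+E. \<Psi> (Suc k) (D @ E)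
      \<partial>measure_pmf (ep_steps P Pz (ucb_policy sel S nA Z Pz R H L D) H 1 (init D)))
      \<le> \<Psi> k D"
  shows "(\<integral>\<^sup>+D. \<Psi> k D \<partial>measure_pmf (cucbvi_run S nA Z P Pz R H L init sel k)) \<le> \<Psi> 0 []"
proof (induction k)
  case 0
  then show ?case by simp
next
  case (Suc k)
  have "(\<integral>\<^sup>+D. \<Psi> (Suc k) D \<partial>measure_pmf (cucbvi_run S nA Z P Pz R H L init sel (Suc k)))
      = (\<integral>\<^sup>+D. \<integral>\<^sup>+E. \<Psi> (Suc k) (D @ E)
            \<partial>measure_pmf (ep_steps P Pz (ucb_policy sel S nA Z Pz R H L D) H 1 (init D))
          \<partial>measure_pmf (cucbvi_run S nA Z P Pz R H L init sel k))"
    by simp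
  also have "\<dots> \<le> (\<integral>\<^sup>+D. \<Psi> k D \<partial>measure_pmf (cucbvi_run S nA Z P Pz R H L init sel k))"
    by (intro nn_integral_mono_AE)
      (auto simp: AE_measure_pmf_iff intro: assms [OF length_cucbvi_run, simplified])
  also have "\<dots> \<le> \<Psi> 0 []"
    by (rule Suc.IH)
  finally show ?case .
qed

section \<open>Optimism and the per-episode regret\<close>

locale cmdp =
  fixes S nA Z :: nat and P Pz :: "nat \<Rightarrow> nat \<Rightarrow> nat pmf" and R :: "nat \<Rightarrow> nat \<Rightarrow> real"
    and H :: nat and L :: real
  assumes nA_pos: "0 < nA" and L_nonneg: "0 \<le> L"
    and P_support: "\<And>s z. s < S \<Longrightarrow> z < Z \<Longrightarrow> set_pmf (P s z) \<subseteq> {..<S}"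
    and Pz_support: "\<And>s a. s < S \<Longrightarrow> a < nA \<Longrightarrow> set_pmf (Pz s a) \<subseteq> {..<Z}"
    and R_bounds: "\<And>s z. s < S \<Longrightarrow> z < Z \<Longrightarrow> 0 \<le> R s z \<and> R s z \<le> 1"
begin

abbreviation "V_opt D j \<equiv> ucb_V S nA Z Pz R H L D j"
abbreviation "V_pol pol j \<equiv> V_rem S Z P Pz R H pol j"
abbreviation "q_opt D W s z \<equiv> ucb_q S H L R D W s z"

definition radius :: "nat \<Rightarrow> real" where
  "radius n = 7 * L * sqrt (real S / real n)"

text \<open>The bonus of \<open>ucb_q\<close> is \<open>b\<^sub>k(s, z) = H radius (N\<^sub>k(s, z))\<close>.\<close>

definition confident :: "tup list \<Rightarrow> bool" where
  "confident D \<longleftrightarrow> (\<forall>s<S. \<forall>z<Z. \<forall>B\<subseteq>{..<S}. 0 < cnt_sz D s z \<longrightarrow>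
     \<bar>real (cnt_sz_in D s z B) - real (cnt_sz D s z) * (\<Sum>y\<in>B. pmf (P s z) y)\<bar>
       \<le> real (cnt_sz D s z) * radius (cnt_sz D s z))"

definition gap_bonus :: "tup list \<Rightarrow> nat \<Rightarrow> nat \<Rightarrow> real" where
  "gap_bonus D s z = (if s < S \<and> z < Z
     then clipped_bonus (real H) (14 * real H * L * sqrt (real S)) (cnt_sz D s z) else 0)"

primrec expected_cost :: "(nat \<Rightarrow> nat \<Rightarrow> real) \<Rightarrow> (nat \<Rightarrow> nat \<Rightarrow> nat) \<Rightarrow> nat \<Rightarrow> nat \<Rightarrow> nat \<Rightarrow> real"
where
  "expected_cost g pol 0 h s = 0"
| "expected_cost g pol (Suc n) h s = (\<Sum>z<Z. pmf (Pz s (pol s h)) z *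
     (g s z + (\<Sum>y<S. pmf (P s z) y * expected_cost g pol n (Suc h) y)))"

lemma gap_bonus_nonneg: "0 \<le> gap_bonus D s z"
  using L_nonneg by (simp add: gap_bonus_def clipped_bonus_nonneg)

lemma gap_bonus_le: "gap_bonus D s z \<le> real H"
  by (simp add: gap_bonus_def clipped_bonus_le)

lemma gap_bonus_eq:
  "s < S \<Longrightarrow> z < Z \<Longrightarrow> 0 < cnt_sz D s z
    \<Longrightarrow> gap_bonus D s z = min (real H) (2 * (real H * radius (cnt_sz D s z)))"
  by (simp add: gap_bonus_def clipped_bonus_def radius_def real_sqrt_divide)

lemma V_rem_Suc:
  "V_pol pol (Suc j) s = (\<Sum>z<Z. pmf (Pz s (pol s (H - j))) z *
     (R s z + (\<Sum>y<S. pmf (P s z) y * V_pol pol j y)))"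
proof -
  define a where "a = pol s (H - j)"
  have "(\<Sum>y<S. (\<Sum>z<Z. pmf (P s z) y * pmf (Pz s a) z) * V_pol pol j y)
      = (\<Sum>z<Z. \<Sum>y<S. pmf (Pz s a) z * (pmf (P s z) y * V_pol pol j y))"
    by (subst sum.swap) (simp add: sum_distrib_left sum_distrib_right mult_ac)
  then show ?thesis
    by (simp add: a_def [symmetric] R_sa_def P_sa_def sum_distrib_left distrib_left sum.distrib)
qed

lemma V_rem_bounds: "s < S \<Longrightarrow> 0 \<le> V_pol pol j s \<and> V_pol pol j s \<le> real j"
proof (induction j arbitrary: s)
  case 0
  then show ?case by simp
next
  case (Suc j)
  have "0 \<le> (\<Sum>y<S. pmf (P s z) y * V_pol pol j y)" for z
    using Suc.IH by (auto intro!: sum_nonneg)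
  moreover have "(\<Sum>y<S. pmf (P s z) y * V_pol pol j y) \<le> real j" for z
    using Suc.IH by (intro sum_pmf_mult_le) auto
  ultimately have "0 \<le> R s z + (\<Sum>y<S. pmf (P s z) y * V_pol pol j y)
      \<and> R s z + (\<Sum>y<S. pmf (P s z) y * V_pol pol j y) \<le> 1 + real j" if "z < Z" for z
    using R_bounds [OF Suc.prems that] by (meson add_mono add_nonneg_nonneg)
  then show ?case
    unfolding V_rem_Suc by (auto intro!: sum_pmf_mult_le sum_nonneg)
qed

lemma ucb_q_bounds:
  assumes "s < S" "z < Z" "\<And>y. y < S \<Longrightarrow> 0 \<le> W y"
  shows "0 \<le> q_opt D W s z \<and> q_opt D W s z \<le> real H"
  using assms R_bounds [OF assms(1,2)] L_nonneg
  by (auto simp: ucb_q_def phat_def intro!: add_nonneg_nonneg sum_nonneg)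

lemma ucb_V_bounds: "s < S \<Longrightarrow> 0 \<le> V_opt D j s \<and> V_opt D j s \<le> real H"
proof (induction j arbitrary: s)
  case 0
  then show ?case by simp
next
  case (Suc j)
  define f where "f a = (\<Sum>z<Z. pmf (Pz s a) z * q_opt D (V_opt D j) s z)" for a
  have f_bounds: "0 \<le> f a \<and> f a \<le> real H" for a
    using ucb_q_bounds [OF Suc.prems] Suc.IH
    by (auto simp: f_def intro!: sum_pmf_mult_le sum_nonneg)
  have "f 0 \<le> Max (f ` {..<nA})"
    using nA_pos by (intro Max_ge) auto
  moreover have "Max (f ` {..<nA}) \<le> real H"
    using f_bounds nA_pos by (subst Max_le_iff) auto
  ultimately show ?case
    using f_bounds [of 0] by (simp add: f_def [symmetric])
qed

lemma confident_transition_error: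
  assumes "confident D" "s < S" "z < Z" "0 < cnt_sz D s z"
    and "\<And>y. y < S \<Longrightarrow> 0 \<le> W y \<and> W y \<le> real H"
  shows "\<bar>(\<Sum>y<S. phat D s z y * W y) - (\<Sum>y<S. pmf (P s z) y * W y)\<bar>
    \<le> real H * radius (cnt_sz D s z)"
proof -
  define n where "n = real (cnt_sz D s z)"
  have "0 < n" using assms(4) by (simp add: n_def)
  have "\<bar>\<Sum>y\<in>{..<S}. (phat D s z y - pmf (P s z) y) * W y\<bar> \<le> real H * radius (cnt_sz D s z)"
  proof (rule abs_sum_mult_le_of_subset_sums)
    fix B assume "B \<subseteq> {..<S}"
    then have "finite B" by (rule finite_subset) simp
    then have "(\<Sum>y\<in>B. phat D s z y - pmf (P s z) y)
        = (real (cnt_sz_in D s z B) - n * (\<Sum>y\<in>B. pmf (P s z) y)) / n"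
      using \<open>0 < n\<close>
      by (simp add: sum_subtractf phat_def n_def sum_divide_distrib [symmetric] sum_cnt_szy
          field_simps sum_distrib_left)
    also have "\<bar>\<dots>\<bar> \<le> radius (cnt_sz D s z)"
      using assms(1-4) \<open>B \<subseteq> {..<S}\<close> \<open>0 < n\<close>
      by (simp add: confident_def n_def abs_divide divide_le_eq mult.commute)
    finally show "\<bar>\<Sum>y\<in>B. phat D s z y - pmf (P s z) y\<bar> \<le> radius (cnt_sz D s z)" .
  qed (use assms(5) in auto)
  then show ?thesis
    by (simp add: left_diff_distrib sum_subtractf)
qed

lemma expected_cost_nonneg: "(\<And>s z. 0 \<le> g s z) \<Longrightarrow> 0 \<le> expected_cost g pol n h s"
  by (induction n arbitrary: h s) (auto intro!: sum_nonneg mult_nonneg_nonneg add_nonneg_nonneg)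

lemma ucb_q_ge_step:
  assumes "confident D" "s < S" "z < Z"
    and V: "\<And>y. y < S \<Longrightarrow> 0 \<le> V y \<and> V y \<le> W y \<and> V y \<le> real H"
    and "R s z + (\<Sum>y<S. pmf (P s z) y * V y) \<le> real H"
  shows "R s z + (\<Sum>y<S. pmf (P s z) y * V y) \<le> q_opt D W s z"
proof (cases "cnt_sz D s z = 0")
  case True
  then show ?thesis
    using assms(5) by (simp add: ucb_q_def)
next
  case False
  have "(\<Sum>y<S. pmf (P s z) y * V y) - real H * radius (cnt_sz D s z) \<le> (\<Sum>y<S. phat D s z y * V y)"
    using confident_transition_error [OF assms(1-3), of V] False V by (auto simp: abs_le_iff)
  also have "\<dots> \<le> (\<Sum>y<S. phat D s z y * W y)"
    using V by (intro sum_mono mult_left_mono) (auto simp: phat_def)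
  finally show ?thesis
    using assms(5) False by (simp add: ucb_q_def radius_def mult.assoc)
qed

lemma V_rem_le_ucb_V:
  assumes "confident D" "\<And>s h. pol s h < nA"
  shows "j \<le> H \<Longrightarrow> s < S \<Longrightarrow> V_pol pol j s \<le> V_opt D j s"
proof (induction j arbitrary: s)
  case 0
  then show ?case by simp
next
  case (Suc j)
  have "R s z + (\<Sum>y<S. pmf (P s z) y * V_pol pol j y) \<le> q_opt D (V_opt D j) s z" if "z < Z" for z
  proof (rule ucb_q_ge_step [OF assms(1) Suc.prems(2) that])
    show "0 \<le> V_pol pol j y \<and> V_pol pol j y \<le> V_opt D j y \<and> V_pol pol j y \<le> real H" if "y < S" for y
      using V_rem_bounds [OF that, of pol j] Suc that by auto
    have "(\<Sum>y<S. pmf (P s z) y * V_pol pol j y) \<le> real j"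
      using V_rem_bounds by (intro sum_pmf_mult_le) auto
    then show "R s z + (\<Sum>y<S. pmf (P s z) y * V_pol pol j y) \<le> real H"
      using R_bounds [OF Suc.prems(2) that] Suc.prems(1) by linarith
  qed
  then have "V_pol pol (Suc j) s \<le> (\<Sum>z<Z. pmf (Pz s (pol s (H - j))) z * q_opt D (V_opt D j) s z)"
    unfolding V_rem_Suc by (intro sum_mono mult_left_mono) auto
  also have "\<dots> \<le> V_opt D (Suc j) s"
    using assms(2) by simp
  finally show ?case .
qed

lemma ucb_V_Suc_eq_policy:
  assumes sel: "\<And>f. sel f < nA \<and> (\<forall>a<nA. f a \<le> f (sel f))" and "j < H"
  shows "V_opt D (Suc j) s = (\<Sum>z<Z. pmf (Pz s (ucb_policy sel S nA Z Pz R H L D s (H - j))) z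
    * q_opt D (V_opt D j) s z)"
proof -
  define f where "f = (\<lambda>a. \<Sum>z<Z. pmf (Pz s a) z * q_opt D (V_opt D j) s z)"
  have "V_opt D (Suc j) s = Max (f ` {..<nA})"
    by (simp add: f_def)
  also have "\<dots> = f (sel f)"
    using sel [of f] by (intro Max_eqI) auto
  also have "sel f = ucb_policy sel S nA Z Pz R H L D s (H - j)"
    using \<open>j < H\<close> by (simp add: ucb_policy_def ucb_Q_def f_def)
  finally show ?thesis
    by (simp add: f_def)
qed

lemma ucb_q_minus_step_le:
  assumes "confident D" "s < S" "z < Z"
    and V: "\<And>y. y < S \<Longrightarrow> 0 \<le> V y \<and> V y \<le> W y \<and> W y \<le> real H"
  shows "q_opt D W s z - (R s z + (\<Sum>y<S. pmf (P s z) y * V y))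
    \<le> gap_bonus D s z + (\<Sum>y<S. pmf (P s z) y * (W y - V y))"
proof -
  have W: "0 \<le> W y \<and> W y \<le> real H" if "y < S" for y
    using V [OF that] by linarith
  have "0 \<le> (\<Sum>y<S. pmf (P s z) y * V y)" "0 \<le> (\<Sum>y<S. pmf (P s z) y * (W y - V y))"
    using V by (auto intro!: sum_nonneg)
  moreover have "q_opt D W s z \<le> real H"
    using ucb_q_bounds [OF assms(2,3), of W] W by blast
  moreover note R_bounds [OF assms(2,3)]
  ultimately have clip: "q_opt D W s z - (R s z + (\<Sum>y<S. pmf (P s z) y * V y))
      \<le> real H + (\<Sum>y<S. pmf (P s z) y * (W y - V y))"
    by linarith
  show ?thesis
  proof (cases "cnt_sz D s z = 0")
    case True
    then show ?thesis
      using clip assms(2,3) by (simp add: gap_bonus_def clipped_bonus_def)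
  next
    case False
    have "(\<Sum>y<S. phat D s z y * W y) \<le> (\<Sum>y<S. pmf (P s z) y * W y) + real H * radius (cnt_sz D s z)"
      using confident_transition_error [OF assms(1-3), of W] False W by (auto simp: abs_le_iff)
    moreover have "q_opt D W s z
        \<le> R s z + (\<Sum>y<S. phat D s z y * W y) + real H * radius (cnt_sz D s z)"
      using False by (simp add: ucb_q_def radius_def mult.assoc)
    ultimately have "q_opt D W s z - (R s z + (\<Sum>y<S. pmf (P s z) y * V y))
        \<le> 2 * (real H * radius (cnt_sz D s z)) + (\<Sum>y<S. pmf (P s z) y * (W y - V y))"
      by (simp add: sum_subtractf right_diff_distrib)
    then show ?thesis
      using clip False assms(2,3) by (simp add: gap_bonus_eq min_def)
  qed
qed

lemma ucb_V_minus_V_rem_le: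
  assumes "confident D" and sel: "\<And>f. sel f < nA \<and> (\<forall>a<nA. f a \<le> f (sel f))"
  defines "pol \<equiv> ucb_policy sel S nA Z Pz R H L D"
  shows "j \<le> H \<Longrightarrow> s < S
    \<Longrightarrow> V_opt D j s - V_pol pol j s \<le> expected_cost (gap_bonus D) pol j (H + 1 - j) s"
proof (induction j arbitrary: s)
  case 0
  then show ?case by simp
next
  case (Suc j)
  have "V_pol pol j y \<le> V_opt D j y" if "y < S" for y
    using V_rem_le_ucb_V [OF assms(1)] sel Suc.prems that by (simp add: pol_def ucb_policy_def)
  then have V: "0 \<le> V_pol pol j y \<and> V_pol pol j y \<le> V_opt D j y \<and> V_opt D j y \<le> real H"
    if "y < S" for y
    using V_rem_bounds ucb_V_bounds that by blast
  have "V_opt D (Suc j) s - V_pol pol (Suc j) s = (\<Sum>z<Z. pmf (Pz s (pol s (H - j))) z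
      * (q_opt D (V_opt D j) s z - (R s z + (\<Sum>y<S. pmf (P s z) y * V_pol pol j y))))"
    using Suc.prems unfolding V_rem_Suc ucb_V_Suc_eq_policy [OF sel Suc_le_lessD [OF Suc.prems(1)]]
    by (simp add: pol_def right_diff_distrib sum_subtractf)
  also have "\<dots> \<le> (\<Sum>z<Z. pmf (Pz s (pol s (H - j))) z * (gap_bonus D s z
      + (\<Sum>y<S. pmf (P s z) y * expected_cost (gap_bonus D) pol j (H + 1 - j) y)))"
  proof (intro sum_mono mult_left_mono)
    fix z assume "z \<in> {..<Z}"
    have "(\<Sum>y<S. pmf (P s z) y * (V_opt D j y - V_pol pol j y))
        \<le> (\<Sum>y<S. pmf (P s z) y * expected_cost (gap_bonus D) pol j (H + 1 - j) y)"
      using Suc by (intro sum_mono mult_left_mono) auto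
    then show "q_opt D (V_opt D j) s z - (R s z + (\<Sum>y<S. pmf (P s z) y * V_pol pol j y))
        \<le> gap_bonus D s z + (\<Sum>y<S. pmf (P s z) y * expected_cost (gap_bonus D) pol j (H + 1 - j) y)"
      using ucb_q_minus_step_le [OF assms(1) Suc.prems(2), of z "V_pol pol j" "V_opt D j"]
        V \<open>z \<in> {..<Z}\<close> by fastforce
  qed simp
  also have "\<dots> = expected_cost (gap_bonus D) pol (Suc j) (H + 1 - Suc j) s"
    using Suc.prems by (simp add: Suc_diff_le)
  finally show ?case .
qed

lemma regret_episode_le:
  assumes "confident D" and sel: "\<And>f. sel f < nA \<and> (\<forall>a<nA. f a \<le> f (sel f))" and "s < S"
  defines "pol \<equiv> ucb_policy sel S nA Z Pz R H L D"
  shows "V_star S nA Z P Pz R H 1 s - V_pi S Z P Pz R H pol 1 s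
    \<le> expected_cost (gap_bonus D) pol H 1 s"
proof -
  have "V_star S nA Z P Pz R H 1 s \<le> V_opt D H s"
    unfolding V_star_def
  proof (rule cSUP_least)
    show "policies nA \<noteq> {}"
      using nA_pos by (auto simp: policies_def intro!: exI [of _ "\<lambda>_ _. 0"])
    show "V_pi S Z P Pz R H pol' 1 s \<le> V_opt D H s" if "pol' \<in> policies nA" for pol'
      using V_rem_le_ucb_V [OF assms(1), of pol' H s] that \<open>s < S\<close>
      by (simp add: V_pi_def policies_def)
  qed
  then show ?thesis
    using ucb_V_minus_V_rem_le [OF assms(1) sel, of H s] \<open>s < S\<close>
    by (simp add: V_pi_def pol_def)
qed

lemma nn_integral_path_cost:
  assumes "\<And>s h. pol s h < nA" "\<And>s z. 0 \<le> g s z" "s < S"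
  shows "(\<integral>\<^sup>+E. ennreal (path_cost g E) \<partial>measure_pmf (ep_steps P Pz pol n h s))
    = ennreal (expected_cost g pol n h s)"
  using assms(3)
proof (induction n arbitrary: h s)
  case 0
  then show ?case by simp
next
  case (Suc n)
  define a where "a = pol s h"
  have Z: "set_pmf (Pz s a) \<subseteq> {..<Z}"
    using Pz_support [OF Suc.prems assms(1)] by (simp add: a_def)
  let ?G = "expected_cost g pol n (Suc h)"
  have G: "0 \<le> ?G y" for y
    using assms(2) by (rule expected_cost_nonneg)
  have "(\<integral>\<^sup>+y. \<integral>\<^sup>+E. ennreal (g s z + path_cost g E) \<partial>measure_pmf (ep_steps P Pz pol n (Suc h) y)
        \<partial>measure_pmf (P s z))
      = ennreal (g s z + (\<Sum>y<S. pmf (P s z) y * ?G y))" if "z \<in> set_pmf (Pz s a)" for z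
  proof -
    have Y: "set_pmf (P s z) \<subseteq> {..<S}"
      using P_support [OF Suc.prems] Z that by blast
    then have "(\<integral>\<^sup>+y. \<integral>\<^sup>+E. ennreal (g s z + path_cost g E)
        \<partial>measure_pmf (ep_steps P Pz pol n (Suc h) y)
        \<partial>measure_pmf (P s z)) = (\<integral>\<^sup>+y. ennreal (g s z) + ennreal (?G y) \<partial>measure_pmf (P s z))"
      using assms(2) G
      by (intro nn_integral_cong_AE)
        (auto simp: AE_measure_pmf_iff nn_integral_add measure_pmf.emeasure_space_1 Suc.IH
          path_cost_nonneg)
    also have "\<dots> = ennreal (g s z + (\<Sum>y<S. pmf (P s z) y * ?G y))"
      using Y assms(2) G
      by (simp add: nn_integral_add measure_pmf.emeasure_space_1 nn_integral_pmf_eq_sum sum_nonneg)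
    finally show ?thesis .
  qed
  then have "(\<integral>\<^sup>+E. ennreal (path_cost g E) \<partial>measure_pmf (ep_steps P Pz pol (Suc n) h s))
      = (\<integral>\<^sup>+z. ennreal (g s z + (\<Sum>y<S. pmf (P s z) y * ?G y)) \<partial>measure_pmf (Pz s a))"
    using Z by (auto simp: a_def AE_measure_pmf_iff intro!: nn_integral_cong_AE)
  also have "\<dots> = ennreal (expected_cost g pol (Suc n) h s)"
    using Z assms(2) G
    by (subst nn_integral_pmf_eq_sum) (auto simp: a_def intro!: add_nonneg_nonneg sum_nonneg)
  finally show ?case .
qed

lemma path_cost_gap_bonus_bounds:
  "0 \<le> path_cost (gap_bonus D) E \<and> path_cost (gap_bonus D) E \<le> real H * real (length E)"
  using path_cost_nonneg [of "gap_bonus D" E] path_cost_le [of "gap_bonus D" "real H" E]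
    gap_bonus_nonneg gap_bonus_le by auto

end

section \<open>Concentration of the empirical transition counts\<close>

text \<open>Capping makes the deviation after
  exactly \<open>n\<close> visits a function of the complete data, so a single supermartingale handles all
  episodes at once.\<close>

primrec capped_dev :: "nat \<Rightarrow> nat \<Rightarrow> nat set \<Rightarrow> real \<Rightarrow> nat \<Rightarrow> nat \<Rightarrow> tup list \<Rightarrow> real" where
  "capped_dev s z B p n c [] = 0"
| "capped_dev s z B p n c (t # D) = (case t of (s', a', z', y') \<Rightarrow>
     if s' = s \<and> z' = z
     then (if c < n then indicator B y' - p else 0) + capped_dev s z B p n (Suc c) D
     else capped_dev s z B p n c D)"

definition dev_process ::
    "(nat \<Rightarrow> nat \<Rightarrow> nat pmf) \<Rightarrow> nat \<Rightarrow> nat \<Rightarrow> nat set \<Rightarrow> nat \<Rightarrow> real \<Rightarrow> real \<Rightarrow> tup list \<Rightarrow> ennreal"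
where
  "dev_process P s z B n l \<sigma> D = ennreal (exp (l * \<sigma> * capped_dev s z B (\<Sum>y\<in>B. pmf (P s z) y) n 0 D
     - l\<^sup>2 / 2 * real (min (cnt_sz D s z) n)))"

lemma capped_dev_append:
  "capped_dev s z B p n c (D @ E)
    = capped_dev s z B p n c D + capped_dev s z B p n (c + cnt_sz D s z) E"
  by (induction D arbitrary: c) (auto simp: cnt_sz_def split: prod.split)

lemma capped_dev_exhausted: "n \<le> c \<Longrightarrow> capped_dev s z B p n c D = 0"
  by (induction D arbitrary: c) (auto split: prod.split)

lemma capped_dev_eq:
  "c + cnt_sz D s z \<le> n
    \<Longrightarrow> capped_dev s z B p n c D = real (cnt_sz_in D s z B) - real (cnt_sz D s z) * p"
proof (induction D arbitrary: c)
  case Nil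
  then show ?case by (simp add: cnt_sz_def cnt_sz_in_def)
next
  case (Cons t D)
  obtain s' a' z' y' where t: "t = (s', a', z', y')"
    by (cases t) auto
  show ?case
  proof (cases "s' = s \<and> z' = z")
    case True
    then have "Suc c + cnt_sz D s z \<le> n"
      using Cons.prems by (simp add: t cnt_sz_def)
    then show ?thesis
      using Cons.IH [of "Suc c"] True
      by (cases "y' \<in> B") (simp_all add: t cnt_sz_def cnt_sz_in_def algebra_simps)
  next
    case False
    then show ?thesis
      using Cons by (auto simp: t cnt_sz_def cnt_sz_in_def)
  qed
qed

lemma dev_process_snoc:
  "dev_process P s z B n l \<sigma> (D @ [(s', a, z', y)]) = dev_process P s z B n l \<sigma> D *
     (if s' = s \<and> z' = z \<and> cnt_sz D s z < n
      then ennreal (exp (l * \<sigma> * (indicator B y - (\<Sum>y\<in>B. pmf (P s z) y)) - l\<^sup>2 / 2)) else 1)"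
proof (cases "s' = s \<and> z' = z \<and> cnt_sz D s z < n")
  case True
  then have "min (cnt_sz (D @ [(s', a, z', y)]) s z) n = Suc (min (cnt_sz D s z) n)"
    by (simp add: cnt_sz_def)
  moreover have "capped_dev s z B p n 0 (D @ [(s', a, z', y)])
      = capped_dev s z B p n 0 D + (indicator B y - p)" for p
    using True by (simp add: capped_dev_append)
  ultimately show ?thesis
    using True unfolding dev_process_def
    by (simp add: ennreal_mult [symmetric] mult_exp_exp ring_distribs)
next
  case False
  then have "min (cnt_sz (D @ [(s', a, z', y)]) s z) n = min (cnt_sz D s z) n"
    by (auto simp: cnt_sz_def)
  moreover have "capped_dev s z B p n 0 (D @ [(s', a, z', y)]) = capped_dev s z B p n 0 D" for p
    using False by (auto simp: capped_dev_append)
  ultimately show ?thesis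
    unfolding dev_process_def if_not_P [OF False] by (simp del: cnt_sz_append)
qed

lemma nn_integral_dev_process_step:
  assumes "finite B" "0 < l" "\<sigma> = 1 \<or> \<sigma> = -1"
  shows "(\<integral>\<^sup>+z'. \<integral>\<^sup>+y. dev_process P s z B n l \<sigma> (D @ [(s', a, z', y)]) \<partial>measure_pmf (P s' z')
      \<partial>measure_pmf (Pz s' a)) \<le> dev_process P s z B n l \<sigma> D"
proof -
  have step: "(\<integral>\<^sup>+y. dev_process P s z B n l \<sigma> (D @ [(s', a, z', y)]) \<partial>measure_pmf (P s' z'))
      \<le> dev_process P s z B n l \<sigma> D" for z'
  proof (cases "s' = s \<and> z' = z \<and> cnt_sz D s z < n")
    case True
    then have "(\<integral>\<^sup>+y. dev_process P s z B n l \<sigma> (D @ [(s', a, z', y)]) \<partial>measure_pmf (P s' z'))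
        = dev_process P s z B n l \<sigma> D * (\<integral>\<^sup>+y. ennreal (exp (l * \<sigma> * (indicator B y
            - (\<Sum>y\<in>B. pmf (P s z) y)) - l\<^sup>2 / 2)) \<partial>measure_pmf (P s z))"
      by (simp only: dev_process_snoc if_P) (rule nn_integral_cmult, simp)
    also have "\<dots> \<le> dev_process P s z B n l \<sigma> D"
      using mult_left_mono [OF nn_integral_exp_indicator_le_1 [OF assms],
          of "dev_process P s z B n l \<sigma> D"]
      by simp
    finally show ?thesis .
  next
    case False
    then show ?thesis
      by (simp only: dev_process_snoc if_not_P) (simp add: measure_pmf.emeasure_space_1)
  qed
  have "(\<integral>\<^sup>+z'. \<integral>\<^sup>+y. dev_process P s z B n l \<sigma> (D @ [(s', a, z', y)]) \<partial>measure_pmf (P s' z')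
      \<partial>measure_pmf (Pz s' a)) \<le> (\<integral>\<^sup>+z'. dev_process P s z B n l \<sigma> D \<partial>measure_pmf (Pz s' a))"
    by (intro nn_integral_mono step)
  then show ?thesis
    by (simp add: measure_pmf.emeasure_space_1)
qed

lemma nn_integral_dev_process_le_1:
  assumes "finite B" "0 < l" "\<sigma> = 1 \<or> \<sigma> = -1"
  shows "(\<integral>\<^sup>+D. dev_process P s z B n l \<sigma> D
    \<partial>measure_pmf (cucbvi_run S nA Z P Pz R H L init sel k)) \<le> 1"
proof -
  have "(\<integral>\<^sup>+D. (\<lambda>_. dev_process P s z B n l \<sigma>) k D
      \<partial>measure_pmf (cucbvi_run S nA Z P Pz R H L init sel k))
      \<le> dev_process P s z B n l \<sigma> []"
    by (rule nn_integral_cucbvi_run_le, rule nn_integral_ep_steps_le,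
        rule nn_integral_dev_process_step [OF assms])
  then show ?thesis
    by (simp add: dev_process_def cnt_sz_def)
qed

section \<open>The regret of C-UCBVI\<close>

lemma conf_L_ge_1:
  assumes "0 < S" "0 < H" "0 < K" "0 < Z" "0 < \<delta>" "\<delta> \<le> 1"
  shows "1 \<le> conf_L S Z H K \<delta>"
proof -
  define X where "X = 5 * real S * real H * real K * real Z * (real K * real H)"
  have "5 \<le> X"
    using assms(1-4) by (simp add: X_def mult_ge1_I)
  also have "X \<le> X / \<delta>"
    using \<open>5 \<le> X\<close> assms(5,6) by (simp add: le_divide_eq)
  finally have "exp 1 \<le> X / \<delta>"
    using exp_le by linarith
  then show ?thesis
    using assms(5) \<open>5 \<le> X\<close> by (simp add: conf_L_def X_def [symmetric] ln_ge_iff)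
qed

lemma regret_polynomial_le:
  fixes h s z l t :: real
  assumes "1 \<le> s" "1 \<le> z" "1 \<le> l" "0 \<le> h" "0 \<le> t"
  shows "4 * h\<^sup>2 * s * z + 84 * h * l * s * t + 2 * h\<^sup>2 * l
    \<le> 100 * h * s * t * l ^ 2 + 100 * (h * s * z * l) ^ 2"
proof -
  define E where "E = (h * s * z * l) ^ 2"
  have "1 \<le> s * z * l\<^sup>2" "1 \<le> s * z * (s * z * l)"
    using assms by (simp_all add: mult_ge1_I power2_eq_square)
  then have "h\<^sup>2 * s * z * 1 \<le> h\<^sup>2 * s * z * (s * z * l\<^sup>2)"
    and "h\<^sup>2 * l * 1 \<le> h\<^sup>2 * l * (s * z * (s * z * l))"
    using assms by (intro mult_left_mono; simp)+
  then have "h\<^sup>2 * s * z \<le> E" "h\<^sup>2 * l \<le> E"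
    by (simp_all add: E_def power2_eq_square mult_ac)
  moreover have "h * s * t * l * 1 \<le> h * s * t * l * l"
    using assms by (intro mult_left_mono) auto
  moreover have "0 \<le> E" "0 \<le> h * s * t * l\<^sup>2"
    using assms by (simp_all add: E_def)
  ultimately have "4 * (h\<^sup>2 * s * z) + 84 * (h * s * t * l) + 2 * (h\<^sup>2 * l)
      \<le> 100 * (h * s * t * l\<^sup>2) + 100 * E"
    by (simp add: power2_eq_square)
  then show ?thesis
    by (simp add: E_def mult_ac)
qed

locale cucbvi = cmdp +
  fixes K :: nat and \<delta> :: real and init :: "tup list \<Rightarrow> nat" and sel :: "(nat \<Rightarrow> real) \<Rightarrow> nat"
  assumes S_pos: "0 < S" and Z_pos: "0 < Z" and H_pos: "0 < H" and K_pos: "0 < K"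
    and \<delta>_pos: "0 < \<delta>" and \<delta>_less_1: "\<delta> < 1" and L_eq: "L = conf_L S Z H K \<delta>"
    and init_lt: "\<And>D. init D < S" and sel_argmax: "\<And>f. sel f < nA \<and> (\<forall>a<nA. f a \<le> f (sel f))"
begin

abbreviation "run \<equiv> cucbvi_run S nA Z P Pz R H L init sel K"

abbreviation "pol D \<equiv> ucb_policy sel S nA Z Pz R H L D"

lemma L_ge_1: "1 \<le> L"
  using conf_L_ge_1 S_pos H_pos K_pos Z_pos \<delta>_pos \<delta>_less_1 by (simp add: L_eq)

lemma pol_lt: "pol D s h < nA"
  using sel_argmax by (simp add: ucb_policy_def)

definition bad_event :: "nat \<times> nat \<times> nat set \<times> nat \<times> real \<Rightarrow> tup list set" where
  "bad_event = (\<lambda>(s, z, B, n, \<sigma>). {D. \<exists>k<K. cnt_sz (take (k * H) D) s z = n \<and>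
     real n * radius n
       < \<sigma> * (real (cnt_sz_in (take (k * H) D) s z B) - real n * (\<Sum>y\<in>B. pmf (P s z) y))})"

definition bad_index :: "(nat \<times> nat \<times> nat set \<times> nat \<times> real) set" where
  "bad_index = {..<S} \<times> {..<Z} \<times> Pow {..<S} \<times> {1..K * H} \<times> {1, -1}"

lemma not_confident_in_bad_event:
  assumes "k < K" "\<not> confident (take (k * H) D)"
  shows "D \<in> (\<Union>i\<in>bad_index. bad_event i)"
proof -
  obtain s z B where "s < S" "z < Z" "B \<subseteq> {..<S}" and n: "0 < cnt_sz (take (k * H) D) s z"
    and violated: "real (cnt_sz (take (k * H) D) s z) * radius (cnt_sz (take (k * H) D) s z)
      < \<bar>real (cnt_sz_in (take (k * H) D) s z B)
         - real (cnt_sz (take (k * H) D) s z) * (\<Sum>y\<in>B. pmf (P s z) y)\<bar>"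
    using assms(2) by (auto simp: confident_def not_le)
  define \<sigma> :: real where "\<sigma> = (if real (cnt_sz_in (take (k * H) D) s z B)
      \<ge> real (cnt_sz (take (k * H) D) s z) * (\<Sum>y\<in>B. pmf (P s z) y) then 1 else -1)"
  have "cnt_sz (take (k * H) D) s z \<le> k * H"
    using cnt_sz_le_length [of "take (k * H) D" s z] by simp
  also have "\<dots> \<le> K * H"
    using assms(1) by simp
  finally have "cnt_sz (take (k * H) D) s z \<le> K * H" .
  then have "(s, z, B, cnt_sz (take (k * H) D) s z, \<sigma>) \<in> bad_index"
    using \<open>s < S\<close> \<open>z < Z\<close> \<open>B \<subseteq> {..<S}\<close> n by (simp add: bad_index_def \<sigma>_def)
  moreover have "D \<in> bad_event (s, z, B, cnt_sz (take (k * H) D) s z, \<sigma>)"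
    using violated assms(1) by (auto simp: bad_event_def \<sigma>_def abs_if split: if_splits)
  ultimately show ?thesis
    by blast
qed

lemma radius_pos: "0 < n \<Longrightarrow> 0 < radius n"
  using L_ge_1 S_pos by (simp add: radius_def)

lemma bad_event_le_dev_process:
  assumes "0 < n" "D \<in> bad_event (s, z, B, n, \<sigma>)"
  shows "ennreal (exp (real n * (radius n)\<^sup>2 / 2)) \<le> dev_process P s z B n (radius n) \<sigma> D"
proof -
  obtain k where "k < K" and cnt: "cnt_sz (take (k * H) D) s z = n"
    and dev: "real n * radius n
      < \<sigma> * (real (cnt_sz_in (take (k * H) D) s z B) - real n * (\<Sum>y\<in>B. pmf (P s z) y))"
    using assms(2) by (auto simp: bad_event_def)
  define D\<^sub>1 D\<^sub>2 where "D\<^sub>1 = take (k * H) D" and "D\<^sub>2 = drop (k * H) D"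
  have D: "D = D\<^sub>1 @ D\<^sub>2"
    by (simp add: D\<^sub>1_def D\<^sub>2_def)
  have "capped_dev s z B (\<Sum>y\<in>B. pmf (P s z) y) n 0 D
      = real (cnt_sz_in (take (k * H) D) s z B) - real n * (\<Sum>y\<in>B. pmf (P s z) y)"
    using cnt unfolding D\<^sub>1_def [symmetric] unfolding D
    by (simp add: capped_dev_append capped_dev_exhausted capped_dev_eq)
  moreover have "min (cnt_sz D s z) n = n"
    using cnt unfolding D\<^sub>1_def [symmetric] unfolding D by simp
  ultimately have "radius n * (real n * radius n)
      \<le> radius n * (\<sigma> * capped_dev s z B (\<Sum>y\<in>B. pmf (P s z) y) n 0 D)"
    using dev radius_pos [OF assms(1)] by (intro mult_left_mono) auto
  then have "real n * (radius n)\<^sup>2 / 2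
      \<le> radius n * \<sigma> * capped_dev s z B (\<Sum>y\<in>B. pmf (P s z) y) n 0 D
        - (radius n)\<^sup>2 / 2 * real (min (cnt_sz D s z) n)"
    using \<open>min (cnt_sz D s z) n = n\<close> by (simp add: power2_eq_square algebra_simps)
  then show ?thesis
    unfolding dev_process_def by (intro ennreal_leI) simp
qed

lemma prob_bad_event_le:
  assumes "0 < n" "B \<subseteq> {..<S}" "\<sigma> \<in> {1, -1}"
  shows "measure_pmf.prob run (bad_event (s, z, B, n, \<sigma>)) \<le> exp (- (49 * L\<^sup>2 * real S / 2))"
proof -
  have "finite B"
    using assms(2) finite_subset by blast
  have "real n * (radius n)\<^sup>2 = 49 * L\<^sup>2 * real S"
    using assms(1) by (simp add: radius_def power_mult_distrib)
  have "measure_pmf.prob run (bad_event (s, z, B, n, \<sigma>))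
      \<le> measure_pmf.prob run
          {D. ennreal (exp (real n * (radius n)\<^sup>2 / 2)) \<le> dev_process P s z B n (radius n) \<sigma> D}"
    using bad_event_le_dev_process [OF assms(1)] by (intro measure_pmf.finite_measure_mono) auto
  also have "\<dots> \<le> 1 / exp (real n * (radius n)\<^sup>2 / 2)"
    using assms(3) by (intro pmf_prob_ge_le_inverse nn_integral_dev_process_le_1 \<open>finite B\<close>
        radius_pos \<open>0 < n\<close>) auto
  also have "\<dots> = exp (- (49 * L\<^sup>2 * real S / 2))"
    using \<open>real n * (radius n)\<^sup>2 = 49 * L\<^sup>2 * real S\<close> by (simp add: exp_minus field_simps)
  finally show ?thesis .
qed

text \<open>With \<open>exp (- L) = \<delta> / (5 S H K Z K H)\<close> and \<open>2 ^ S \<le> exp S\<close>, the exponent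
  \<open>49 L\<^sup>2 S / 2 \<ge> L + S\<close> pays for the \<open>2 S Z 2 ^ S K H\<close> events of the union bound.\<close>

lemma card_bad_index_mult_le: "real (card bad_index) * exp (- (49 * L\<^sup>2 * real S / 2)) \<le> \<delta> / 2"
proof -
  define X where "X = 5 * real S * real H * real K * real Z * (real K * real H)"
  have "0 < X"
    using S_pos H_pos K_pos Z_pos by (simp add: X_def)
  have card: "card bad_index = S * Z * 2 ^ S * (K * H) * 2"
    by (simp add: bad_index_def card_cartesian_product card_Pow)
  have "exp (- L) = \<delta> / X"
    using \<open>0 < X\<close> \<delta>_pos by (simp add: L_eq conf_L_def X_def [symmetric] exp_minus)
  have "(2::real) ^ S \<le> exp 1 ^ S"
    using exp_ge_add_one_self [of 1] by (intro power_mono) auto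
  then have "exp (- real S) \<le> inverse (2 ^ S)"
    by (simp add: exp_minus le_imp_inverse_le flip: exp_of_nat_mult)
  have "1 \<le> L * real S" "1 \<le> L * L"
    using L_ge_1 S_pos by (simp_all add: mult_ge1_I)
  then have "L * 1 \<le> L * (L * real S)" "real S * 1 \<le> real S * (L * L)"
    using L_ge_1 by (intro mult_left_mono; simp)+
  then have "exp (- (49 * L\<^sup>2 * real S / 2)) \<le> exp (- L) * exp (- real S)"
    by (simp add: mult_exp_exp power2_eq_square mult_ac)
  also have "\<dots> \<le> \<delta> / X * inverse (2 ^ S)"
    using \<open>exp (- L) = \<delta> / X\<close> \<open>exp (- real S) \<le> inverse (2 ^ S)\<close> \<delta>_pos \<open>0 < X\<close>
    by (simp add: divide_right_mono mult_left_mono)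
  finally have "real (card bad_index) * exp (- (49 * L\<^sup>2 * real S / 2))
      \<le> real (card bad_index) * (\<delta> / X * inverse (2 ^ S))"
    by (intro mult_left_mono) auto
  also have "\<dots> = 2 * \<delta> / (5 * (real K * real H))"
    using S_pos Z_pos H_pos K_pos by (simp add: card X_def field_simps)
  also have "\<dots> \<le> \<delta> / 2"
    using mult_ge1_I [of "real K" "real H"] K_pos H_pos \<delta>_pos by (simp add: field_simps)
  finally show ?thesis .
qed

lemma prob_not_confident_le: "measure_pmf.prob run {D. \<exists>k<K. \<not> confident (take (k * H) D)} \<le> \<delta> / 2"
proof -
  have "finite bad_index"
    by (simp add: bad_index_def)
  have "measure_pmf.prob run {D. \<exists>k<K. \<not> confident (take (k * H) D)}
      \<le> measure_pmf.prob run (\<Union>i\<in>bad_index. bad_event i)"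
    using not_confident_in_bad_event by (intro measure_pmf.finite_measure_mono) auto
  also have "\<dots> \<le> (\<Sum>i\<in>bad_index. measure_pmf.prob run (bad_event i))"
    using \<open>finite bad_index\<close> by (intro measure_pmf.finite_measure_subadditive_finite) auto
  also have "\<dots> \<le> (\<Sum>i\<in>bad_index. exp (- (49 * L\<^sup>2 * real S / 2)))"
    by (intro sum_mono) (auto simp: bad_index_def intro!: prob_bad_event_le)
  also have "\<dots> \<le> \<delta> / 2"
    using card_bad_index_mult_le by simp
  finally show ?thesis .
qed

definition expected_gap :: "tup list \<Rightarrow> real" where
  "expected_gap D = expected_cost (gap_bonus D) (pol D) H 1 (init D)"

definition realized_gap :: "nat \<Rightarrow> tup list \<Rightarrow> real" where
  "realized_gap k D = path_cost (gap_bonus (take (k * H) D)) (take H (drop (k * H) D))"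

text \<open>A nonnegative supermartingale along the episodes; \<open>1 - exp (-1)\<close> is the constant of
  \<open>nn_integral_exp_neg_le\<close> for bonus sums with range \<open>[0, H\<^sup>2]\<close>.\<close>

definition gap_process :: "nat \<Rightarrow> tup list \<Rightarrow> ennreal" where
  "gap_process k D = ennreal (exp ((\<Sum>i<k. (1 - exp (-1)) * expected_gap (take (i * H) D)
     - realized_gap i D) / (real H)\<^sup>2))"

lemma take_mult_append: "length D = k * H \<Longrightarrow> i \<le> k \<Longrightarrow> take (i * H) (D @ E) = take (i * H) D"
  by simp

lemma episode_append:
  assumes "length D = k * H" "i < k"
  shows "take H (drop (i * H) (D @ E)) = take H (drop (i * H) D)"
proof -
  have "i * H + H \<le> k * H"
    using mult_le_mono1 [of "Suc i" k H] assms(2) by simp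
  then show ?thesis
    using assms(1) by simp
qed

lemma gap_process_append:
  assumes "length D = k * H" "length E = H"
  shows "gap_process (Suc k) (D @ E) = gap_process k D
    * ennreal (exp (((1 - exp (-1)) * expected_gap D - path_cost (gap_bonus D) E) / (real H)\<^sup>2))"
proof -
  have "(\<Sum>i<k. (1 - exp (-1)) * expected_gap (take (i * H) (D @ E)) - realized_gap i (D @ E))
      = (\<Sum>i<k. (1 - exp (-1)) * expected_gap (take (i * H) D) - realized_gap i D)"
    using assms(1)
    by (intro sum.cong) (simp_all add: realized_gap_def episode_append [OF assms(1)]
        take_mult_append [OF assms(1)]
        del: take_append drop_append)
  moreover have "take (k * H) (D @ E) = D" "take H (drop (k * H) (D @ E)) = E"
    using assms by simp_all
  ultimately show ?thesis
    by (simp add: gap_process_def realized_gap_def add_divide_distrib exp_add ennreal_mult)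
qed

lemma nn_integral_gap_process_step:
  assumes "length D = k * H"
  shows "(\<integral>\<^sup>+E. gap_process (Suc k) (D @ E) \<partial>measure_pmf (ep_steps P Pz (pol D) H 1 (init D)))
    \<le> gap_process k D"
proof -
  let ?Q = "ep_steps P Pz (pol D) H 1 (init D)"
  let ?c = "1 - exp (-1::real)"
  have "(\<integral>\<^sup>+E. gap_process (Suc k) (D @ E) \<partial>measure_pmf ?Q)
      = (\<integral>\<^sup>+E. (gap_process k D * ennreal (exp (?c * expected_gap D / (real H)\<^sup>2)))
          * ennreal (exp (- (path_cost (gap_bonus D) E / (real H)\<^sup>2))) \<partial>measure_pmf ?Q)"
  proof (intro nn_integral_cong_AE, unfold AE_measure_pmf_iff, intro ballI)
    fix E assume "E \<in> set_pmf ?Q"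
    have "exp ((?c * expected_gap D - path_cost (gap_bonus D) E) / (real H)\<^sup>2)
        = exp (?c * expected_gap D / (real H)\<^sup>2) * exp (- (path_cost (gap_bonus D) E / (real H)\<^sup>2))"
      by (simp only: mult_exp_exp add_divide_distrib diff_conv_add_uminus minus_divide_left)
    then show "gap_process (Suc k) (D @ E)
        = (gap_process k D * ennreal (exp (?c * expected_gap D / (real H)\<^sup>2)))
        * ennreal (exp (- (path_cost (gap_bonus D) E / (real H)\<^sup>2)))"
      using gap_process_append [OF assms length_ep_steps [OF \<open>E \<in> set_pmf ?Q\<close>]]
      by (simp add: ennreal_mult mult.assoc)
  qed
  also have "\<dots> = (gap_process k D * ennreal (exp (?c * expected_gap D / (real H)\<^sup>2)))
      * (\<integral>\<^sup>+E. ennreal (exp (- (path_cost (gap_bonus D) E / (real H)\<^sup>2))) \<partial>measure_pmf ?Q)"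
    by (rule nn_integral_cmult) simp
  also have "\<dots> \<le> (gap_process k D * ennreal (exp (?c * expected_gap D / (real H)\<^sup>2)))
      * ennreal (exp (- (?c * expected_gap D / (real H)\<^sup>2)))"
  proof (rule mult_left_mono [OF nn_integral_exp_neg_le])
    show "0 \<le> path_cost (gap_bonus D) E \<and> path_cost (gap_bonus D) E \<le> (real H)\<^sup>2"
      if "E \<in> set_pmf ?Q" for E
      using path_cost_gap_bonus_bounds [of D E] length_ep_steps [OF that]
      by (simp add: power2_eq_square)
  qed (simp_all add: H_pos expected_gap_def expected_cost_nonneg gap_bonus_nonneg
      nn_integral_path_cost [OF pol_lt gap_bonus_nonneg init_lt])
  also have "\<dots> = gap_process k D"
    by (simp add: mult.assoc ennreal_mult [symmetric] exp_minus_inverse)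
  finally show ?thesis .
qed

lemma prob_gap_process_ge_le: "measure_pmf.prob run {D. ennreal (2 / \<delta>) \<le> gap_process K D} \<le> \<delta> / 2"
proof -
  have "(\<integral>\<^sup>+D. gap_process K D \<partial>measure_pmf run) \<le> gap_process 0 []"
    by (intro nn_integral_cucbvi_run_le nn_integral_gap_process_step)
  then have "(\<integral>\<^sup>+D. gap_process K D \<partial>measure_pmf run) \<le> 1"
    by (simp add: gap_process_def)
  then show ?thesis
    using pmf_prob_ge_le_inverse [where \<Phi> = "gap_process K" and M = run and c = "2 / \<delta>"] \<delta>_pos
    by simp
qed

lemma expected_gap_sum_le:
  assumes "\<not> ennreal (2 / \<delta>) \<le> gap_process K D"
  shows "(1 - exp (-1)) * (\<Sum>k<K. expected_gap (take (k * H) D))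
    \<le> (\<Sum>k<K. realized_gap k D) + (real H)\<^sup>2 * ln (2 / \<delta>)"
proof -
  define x where "x = (\<Sum>k<K. (1 - exp (-1)) * expected_gap (take (k * H) D) - realized_gap k D)"
  have "\<not> 2 / \<delta> \<le> exp (x / (real H)\<^sup>2)"
  proof
    assume "2 / \<delta> \<le> exp (x / (real H)\<^sup>2)"
    then have "ennreal (2 / \<delta>) \<le> gap_process K D"
      unfolding gap_process_def x_def by (rule ennreal_leI)
    with assms show False ..
  qed
  then have "exp (x / (real H)\<^sup>2) < 2 / \<delta>"
    by simp
  then have "x / (real H)\<^sup>2 < ln (2 / \<delta>)"
    using ln_less_cancel_iff [of "exp (x / (real H)\<^sup>2)" "2 / \<delta>"] \<delta>_pos by simp
  then have "x < (real H)\<^sup>2 * ln (2 / \<delta>)"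
    using H_pos by (simp add: divide_less_eq mult.commute)
  then show ?thesis
    by (simp add: x_def sum_subtractf sum_distrib_left)
qed

lemma realized_gap_eq:
  "realized_gap k D = (\<Sum>s<S. \<Sum>z<Z. real (cnt_sz (take H (drop (k * H) D)) s z)
    * clipped_bonus (real H) (14 * real H * L * sqrt (real S))
        (\<Sum>i<k. cnt_sz (take H (drop (i * H) D)) s z))"
proof -
  have "realized_gap k D
      = (\<Sum>s<S. \<Sum>z<Z. real (cnt_sz (take H (drop (k * H) D)) s z) * gap_bonus (take (k * H) D) s z)"
    unfolding realized_gap_def by (rule path_cost_eq_sum_cnt_sz) (auto simp: gap_bonus_def)
  then show ?thesis
    by (simp add: gap_bonus_def cnt_sz_take_mult)
qed

lemma sum_realized_gap_le:
  "(\<Sum>k<K. realized_gap k D)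
    \<le> 2 * (real H)\<^sup>2 * real S * real Z
      + 42 * real H * L * real S * sqrt (real Z * (real K * real H))"
proof -
  define c where "c = 14 * real H * L * sqrt (real S)"
  have "0 \<le> c"
    using L_nonneg by (simp add: c_def)
  have "(\<Sum>k<K. realized_gap k D) = (\<Sum>s<S. \<Sum>z<Z. \<Sum>k<K. real (cnt_sz (take H (drop (k * H) D)) s z)
      * clipped_bonus (real H) c (\<Sum>i<k. cnt_sz (take H (drop (i * H) D)) s z))"
    unfolding realized_gap_eq c_def [symmetric]
    by (subst sum.swap) (simp add: sum.swap [of _ "{..<K}"])
  also have "\<dots> \<le> (\<Sum>s<S. \<Sum>z<Z. 2 * (real H)\<^sup>2 + 3 * c * sqrt (real (cnt_sz (take (K * H) D) s z)))"
    using \<open>0 \<le> c\<close> by (intro sum_mono sum_cnt_sz_clipped_bonus_le)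
  also have "\<dots> = 2 * (real H)\<^sup>2 * real S * real Z
      + 3 * c * (\<Sum>s<S. \<Sum>z<Z. sqrt (real (cnt_sz (take (K * H) D) s z)))"
    by (simp add: sum.distrib sum_distrib_left)
  also have "\<dots> \<le> 2 * (real H)\<^sup>2 * real S * real Z
      + 3 * c * sqrt (real S * real Z * (real K * real H))"
    using \<open>0 \<le> c\<close>
      sum_sqrt_cnt_sz_le [where E = "take (K * H) D" and T = "real K * real H" and S = S and Z = Z]
    by (intro add_left_mono mult_left_mono) (simp_all flip: of_nat_mult)
  also have "3 * c * sqrt (real S * real Z * (real K * real H))
      = 42 * real H * L * real S * sqrt (real Z * (real K * real H))"
    by (simp add: c_def real_sqrt_mult)
  finally show ?thesis .
qed

lemma regret_le_sum_expected_gap: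
  assumes "\<forall>k<K. confident (take (k * H) D)"
  shows "regret S nA Z P Pz R H K L init sel D \<le> (\<Sum>k<K. expected_gap (take (k * H) D))"
  unfolding regret_def expected_gap_def
  using assms by (intro sum_mono regret_episode_le sel_argmax init_lt) auto

lemma ln_two_div_le_L: "ln (2 / \<delta>) \<le> L"
proof -
  have "1 \<le> real S * real H * real K * real Z * (real K * real H)"
    using S_pos H_pos K_pos Z_pos by (intro mult_ge1_I) auto
  then have "2 \<le> 5 * real S * real H * real K * real Z * (real K * real H)"
    by (simp add: mult.assoc)
  then show ?thesis
    using \<delta>_pos S_pos H_pos K_pos Z_pos by (simp add: L_eq conf_L_def divide_right_mono)
qed

lemma regret_le_on_good_event:
  assumes "\<forall>k<K. confident (take (k * H) D)" "\<not> ennreal (2 / \<delta>) \<le> gap_process K D"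
  shows "regret S nA Z P Pz R H K L init sel D \<le> 4 * (real H)\<^sup>2 * real S * real Z
    + 84 * real H * L * real S * sqrt (real Z * (real K * real H)) + 2 * (real H)\<^sup>2 * L"
proof -
  have "exp (-1::real) \<le> 1 / 2"
    using exp_ge_add_one_self [of 1] by (simp add: exp_minus field_simps)
  moreover have "0 \<le> (\<Sum>k<K. expected_gap (take (k * H) D))"
    by (intro sum_nonneg) (simp add: expected_gap_def expected_cost_nonneg gap_bonus_nonneg)
  ultimately have "2 * exp (-1) * (\<Sum>k<K. expected_gap (take (k * H) D))
      \<le> 1 * (\<Sum>k<K. expected_gap (take (k * H) D))"
    by (intro mult_right_mono) auto
  then have "(\<Sum>k<K. expected_gap (take (k * H) D))
      \<le> 2 * ((1 - exp (-1)) * (\<Sum>k<K. expected_gap (take (k * H) D)))"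
    by (simp add: algebra_simps)
  also have "\<dots> \<le> 2 * ((\<Sum>k<K. realized_gap k D) + (real H)\<^sup>2 * L)"
    using expected_gap_sum_le [OF assms(2)] mult_left_mono [OF ln_two_div_le_L, of "(real H)\<^sup>2"]
    by simp
  finally show ?thesis
    using regret_le_sum_expected_gap [OF assms(1)] sum_realized_gap_le [of D] by simp
qed

lemma prob_regret_le:
  "1 - \<delta> \<le> measure_pmf.prob run {D. regret S nA Z P Pz R H K L init sel D
     \<le> 100 * real H * real S * sqrt (real Z * (real K * real H)) * L ^ 2
       + 100 * (real H * real S * real Z * L) ^ 2}"
    (is "_ \<le> measure_pmf.prob run ?good")
proof -
  let ?A = "{D. \<exists>k<K. \<not> confident (take (k * H) D)}"
  let ?B = "{D. ennreal (2 / \<delta>) \<le> gap_process K D}"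
  have "D \<in> ?good" if "D \<notin> ?A" "D \<notin> ?B" for D
  proof -
    have "regret S nA Z P Pz R H K L init sel D \<le> 4 * (real H)\<^sup>2 * real S * real Z
        + 84 * real H * L * real S * sqrt (real Z * (real K * real H)) + 2 * (real H)\<^sup>2 * L"
      using that by (intro regret_le_on_good_event) auto
    also have "\<dots> \<le> 100 * real H * real S * sqrt (real Z * (real K * real H)) * L ^ 2
        + 100 * (real H * real S * real Z * L) ^ 2"
      using S_pos Z_pos L_ge_1 by (intro regret_polynomial_le) auto
    finally show ?thesis
      by simp
  qed
  then have "UNIV - (?A \<union> ?B) \<subseteq> ?good"
    by blast
  then have "measure_pmf.prob run (UNIV - (?A \<union> ?B)) \<le> measure_pmf.prob run ?good"
    by (intro measure_pmf.finite_measure_mono) auto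
  moreover have "measure_pmf.prob run (?A \<union> ?B) \<le> measure_pmf.prob run ?A + measure_pmf.prob run ?B"
    by (rule measure_Un_le) auto
  ultimately show ?thesis
    using prob_not_confident_le prob_gap_process_ge_le measure_pmf.prob_compl [of "?A \<union> ?B" run]
    by simp
qed

end

theorem theorem1:
  shows "\<exists>(C::real) (p::nat). \<forall>(S::nat) (nA::nat) (Z::nat) (H::nat) (K::nat) (\<delta>::real)
     (P::nat \<Rightarrow> nat \<Rightarrow> nat pmf) (Pz::nat \<Rightarrow> nat \<Rightarrow> nat pmf) (R::nat \<Rightarrow> nat \<Rightarrow> real)
     (init::tup list \<Rightarrow> nat) (sel::(nat \<Rightarrow> real) \<Rightarrow> nat).
     1 \<le> S \<and> 1 \<le> nA \<and> 1 \<le> Z \<and> 1 \<le> H \<and> 1 \<le> K \<and> 0 < \<delta> \<and>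
     (\<forall>s<S. \<forall>z<Z. set_pmf (P s z) \<subseteq> {..<S}) \<and>
     (\<forall>s<S. \<forall>a<nA. set_pmf (Pz s a) \<subseteq> {..<Z}) \<and>
     (\<forall>s<S. \<forall>z<Z. 0 \<le> R s z \<and> R s z \<le> 1) \<and>
     (\<forall>D. init D < S) \<and>
     (\<forall>f. sel f < nA \<and> (\<forall>a<nA. f a \<le> f (sel f)))
     \<longrightarrow>
     (let L = conf_L S Z H K \<delta>; T = real K * real H in
      measure_pmf.prob (cucbvi_run S nA Z P Pz R H L init sel K)
        {D. regret S nA Z P Pz R H K L init sel D
            \<le> C * real H * real S * sqrt (real Z * T) * L ^ p
              + C * (real H * real S * real Z * L) ^ p}
      \<ge> 1 - \<delta>)"
  apply (intro exI [of _ "100 :: real"] exI [of _ "2 :: nat"] allI impI)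
  subgoal premises model for S nA Z H K \<delta> P Pz R init sel
  proof (cases "\<delta> < 1")
    case True
    interpret cucbvi S nA Z P Pz R H "conf_L S Z H K \<delta>" K \<delta> init sel
      using model True conf_L_ge_1 [of S H K Z \<delta>] by unfold_locales auto
    show ?thesis
      using prob_regret_le by (simp add: Let_def)
  next
    case False
    then show ?thesis
      unfolding Let_def by (intro order_trans [OF _ measure_nonneg]) simp
  qed
  done

end
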